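(* For a quantum sequence ensemble $\mathcal{E}=\bigotimes_{l=1}^{L}\mathcal{E}^{l}$, $\vec{x}=(x_{1},\ldots,x_{L})$ with $x_l\in\{1,\ldots,n_l\}$, and $E\in\mathbb{M}_{\vec{x}}(\mathcal{E})$, we have \[ \Big[\bigotimes_{l=1}^{L}\Pi_{x_{l}}^{\bot}(\mathcal{E}^{l})\Big]\Pi(\mathcal{E})E\Pi(\mathcal{E})\Big[\bigotimes_{l=1}^{L}\Pi_{x_{l}}^{\bot}(\mathcal{E}^{l})\Big]=\Pi(\mathcal{E})E\Pi(\mathcal{E}), \] where $\Pi(\mathcal{E})$ is the projection onto the support of $\rho_{0}$ and $\Pi_{x_{l}}^{\bot}(\mathcal{E}^{l})$ is the projection onto the kernel of $\mathcal{C}_{x_{l}}(\mathcal{E}^{l})\rho_{0}^{l}-\eta_{x_{l}}^{l}\rho_{x_{l}}^{l}$.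
   Context: Let $\mathcal{E}^{l}=\{\eta_{i}^{l},\rho_{i}^{l}\}_{i\in\{1,\ldots,n_{l}\}}$, $l=1,\ldots,L$, be quantum state ensembles (density operators on finite-dimensional Hilbert spaces, nonzero probabilities $\eta_i^l$), with average states $\rho_0^l=\sum_i\eta_i^l\rho_i^l$. The sequence ensemble $\mathcal{E}=\bigotimes_l\mathcal{E}^l=\{\eta_{\vec{c}},\rho_{\vec{c}}\}_{\vec{c}}$ has $\eta_{\vec{c}}=\prod_l\eta_{c_l}^l$, $\rho_{\vec{c}}=\bigotimes_l\rho_{c_l}^l$, and average state $\rho_0=\bigotimes_l\rho_0^l$. For an ensemble $\{\eta_i,\rho_i\}_i$ with average state $\rho_0$, the maximum confidence to identify $\rho_x$ is $\mathcal{C}_x=\max\eta_x\mathrm{Tr}(\rho_xM_x)/\mathrm{Tr}(\rho_0M_x)$ over measurements $\{M_?\}\cup\{M_i\}_i$ with $\mathrm{Tr}(\rho_0M_x)>0$; equivalently $\mathcal{C}_x=\min\{q\in\mathbb{R}\mid q\rho_0-\eta_x\rho_x\succeq0\}$. For the sequence ensemble, $\mathbb{M}_{\vec{x}}(\mathcal{E})=\{E\succeq0\mid \mathrm{Tr}[(\mathcal{C}_{\vec{x}}(\mathcal{E})\rho_0-\eta_{\vec{x}}\rho_{\vec{x}})E]=0\}$, the set of positive-semidefinite operators that can serve as the $\vec{x}$-th element of a maximum-confidence measurement. *)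

theory Defs
  imports "Jordan_Normal_Form.Matrix_Kernel"
begin

definition ctrace :: "complex mat \<Rightarrow> complex" where
  "ctrace A = (\<Sum>i<dim_row A. A $$ (i, i))"

definition cadj :: "complex mat \<Rightarrow> complex mat" where
  "cadj A = mat (dim_col A) (dim_row A) (\<lambda>(i, j). cnj (A $$ (j, i)))"

definition cinner :: "complex vec \<Rightarrow> complex vec \<Rightarrow> complex" where
  "cinner v w = (\<Sum>i<dim_vec v. cnj (v $ i) * w $ i)"

definition psd :: "nat \<Rightarrow> complex mat \<Rightarrow> bool" where
  "psd n A \<longleftrightarrow> A \<in> carrier_mat n n \<and> cadj A = A \<and>
     (\<forall>v \<in> carrier_vec n. 0 \<le> Re (cinner v (A *\<^sub>v v)))"

definition density_op :: "nat \<Rightarrow> complex mat \<Rightarrow> bool" where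
  "density_op n \<rho> \<longleftrightarrow> psd n \<rho> \<and> ctrace \<rho> = 1"

definition mat_range :: "complex mat \<Rightarrow> complex vec set" where
  "mat_range A = {A *\<^sub>v v | v. v \<in> carrier_vec (dim_col A)}"

definition is_orth_proj :: "nat \<Rightarrow> complex mat \<Rightarrow> complex vec set \<Rightarrow> bool" where
  "is_orth_proj n P S \<longleftrightarrow> P \<in> carrier_mat n n \<and> P * P = P \<and> cadj P = P \<and> mat_range P = S"

definition orth_proj :: "nat \<Rightarrow> complex vec set \<Rightarrow> complex mat" where
  "orth_proj n S = (THE P. is_orth_proj n P S)"

text \<open>Projection onto the support (= range, for Hermitian operators) of a square matrix.\<close>
definition supp_proj :: "complex mat \<Rightarrow> complex mat" where
  "supp_proj A = orth_proj (dim_row A) (mat_range A)"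

definition ker_proj :: "complex mat \<Rightarrow> complex mat" where
  "ker_proj A = orth_proj (dim_row A) (mat_kernel A)"

definition kron :: "complex mat \<Rightarrow> complex mat \<Rightarrow> complex mat" where
  "kron A B = mat (dim_row A * dim_row B) (dim_col A * dim_col B)
     (\<lambda>(i, j). A $$ (i div dim_row B, j div dim_col B) * B $$ (i mod dim_row B, j mod dim_col B))"

definition tensor_list :: "nat \<Rightarrow> (nat \<Rightarrow> complex mat) \<Rightarrow> complex mat" where
  "tensor_list L f = foldr (\<lambda>l M. kron (f l) M) [0..<L] (1\<^sub>m 1)"

definition max_conf :: "nat \<Rightarrow> real \<Rightarrow> complex mat \<Rightarrow> complex mat \<Rightarrow> real" where
  "max_conf n \<eta>x \<rho>x \<rho>0 =
     Inf {q :: real. psd n (complex_of_real q \<cdot>\<^sub>m \<rho>0 - complex_of_real \<eta>x \<cdot>\<^sub>m \<rho>x)}"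

definition ensemble :: "nat \<Rightarrow> nat \<Rightarrow> (nat \<Rightarrow> real) \<Rightarrow> (nat \<Rightarrow> complex mat) \<Rightarrow> bool" where
  "ensemble d n \<eta> \<rho> \<longleftrightarrow> (\<forall>i<n. 0 < \<eta> i \<and> density_op d (\<rho> i)) \<and> (\<Sum>i<n. \<eta> i) = 1"

definition avg_state :: "nat \<Rightarrow> nat \<Rightarrow> (nat \<Rightarrow> real) \<Rightarrow> (nat \<Rightarrow> complex mat) \<Rightarrow> complex mat" where
  "avg_state d n \<eta> \<rho> = mat d d (\<lambda>(a, b). \<Sum>i<n. complex_of_real (\<eta> i) * \<rho> i $$ (a, b))"

text \<open>Sequence ensemble  E = E^0 \<otimes> ... \<otimes> E^(L-1)  (0-based indexing of the factors and of
  the states); ensemble l lives on C^(d l) and has n l members eta l i, rho l i.\<close>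

definition seq_dim :: "nat \<Rightarrow> (nat \<Rightarrow> nat) \<Rightarrow> nat" where
  "seq_dim L d = (\<Prod>l<L. d l)"

definition seq_prob :: "nat \<Rightarrow> (nat \<Rightarrow> nat \<Rightarrow> real) \<Rightarrow> (nat \<Rightarrow> nat) \<Rightarrow> real" where
  "seq_prob L \<eta> x = (\<Prod>l<L. \<eta> l (x l))"

definition seq_state :: "nat \<Rightarrow> (nat \<Rightarrow> nat \<Rightarrow> complex mat) \<Rightarrow> (nat \<Rightarrow> nat) \<Rightarrow> complex mat" where
  "seq_state L \<rho> x = tensor_list L (\<lambda>l. \<rho> l (x l))"

definition seq_avg :: "nat \<Rightarrow> (nat \<Rightarrow> nat) \<Rightarrow> (nat \<Rightarrow> nat) \<Rightarrow> (nat \<Rightarrow> nat \<Rightarrow> real)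
    \<Rightarrow> (nat \<Rightarrow> nat \<Rightarrow> complex mat) \<Rightarrow> complex mat" where
  "seq_avg L d n \<eta> \<rho> = tensor_list L (\<lambda>l. avg_state (d l) (n l) (\<eta> l) (\<rho> l))"

definition comp_conf :: "(nat \<Rightarrow> nat) \<Rightarrow> (nat \<Rightarrow> nat) \<Rightarrow> (nat \<Rightarrow> nat \<Rightarrow> real)
    \<Rightarrow> (nat \<Rightarrow> nat \<Rightarrow> complex mat) \<Rightarrow> nat \<Rightarrow> nat \<Rightarrow> real" where
  "comp_conf d n \<eta> \<rho> l x = max_conf (d l) (\<eta> l x) (\<rho> l x) (avg_state (d l) (n l) (\<eta> l) (\<rho> l))"

definition seq_conf :: "nat \<Rightarrow> (nat \<Rightarrow> nat) \<Rightarrow> (nat \<Rightarrow> nat) \<Rightarrow> (nat \<Rightarrow> nat \<Rightarrow> real)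
    \<Rightarrow> (nat \<Rightarrow> nat \<Rightarrow> complex mat) \<Rightarrow> (nat \<Rightarrow> nat) \<Rightarrow> real" where
  "seq_conf L d n \<eta> \<rho> x =
     max_conf (seq_dim L d) (seq_prob L \<eta> x) (seq_state L \<rho> x) (seq_avg L d n \<eta> \<rho>)"

definition seq_MC_set :: "nat \<Rightarrow> (nat \<Rightarrow> nat) \<Rightarrow> (nat \<Rightarrow> nat) \<Rightarrow> (nat \<Rightarrow> nat \<Rightarrow> real)
    \<Rightarrow> (nat \<Rightarrow> nat \<Rightarrow> complex mat) \<Rightarrow> (nat \<Rightarrow> nat) \<Rightarrow> complex mat set" where
  "seq_MC_set L d n \<eta> \<rho> x =
     {E. psd (seq_dim L d) E \<and>
         ctrace ((complex_of_real (seq_conf L d n \<eta> \<rho> x) \<cdot>\<^sub>m seq_avg L d n \<eta> \<rho>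
                  - complex_of_real (seq_prob L \<eta> x) \<cdot>\<^sub>m seq_state L \<rho> x) * E) = 0}"

end

(* Split rho_0 = A0 (x) B0 and rho_x = A1 (x) B1 into the first factor and the rest, let
   M_1 = C_1 A0 - eta_1 A1, M' = C' B0 - eta' B1 and M be the confidence operators of the first factor,
   of the rest and of the whole sequence.  The two decompositions into positive semidefinite tensor products
     M = C_1 (A0 (x) M') + M_1 (x) (eta' B1) = C' (M_1 (x) B0) + eta_1 (A1 (x) M')
   show that the maximum confidence is multiplicative, C = C_1 C' (product vectors show that no smaller
   value is admissible), and that every w in ker M satisfies (A0 (x) M') w = 0 and (M_1 (x) B0) w = 0.
   If w also lies in the range of A0 (x) B0, the Hermitian factors A0 and B0 can be cancelled, so w is
   fixed by ker_proj M_1 (x) ker_proj M' and, inductively, by the tensor product Q of all the kernel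
   projections.  For E in M_x, Tr (M E) = 0 with M and E positive semidefinite forces M E = 0, so every
   vector P E P z lies in ker M and in the range of rho_0.  Hence Q P E P = P E P, and taking adjoints
   gives Q P E P Q = P E P. *)

theory Submission
  imports Defs
begin

section \<open>Matrices, adjoints and inner products\<close>

lemma index_mult_mat_sum:
  "A \<in> carrier_mat n m \<Longrightarrow> B \<in> carrier_mat m k \<Longrightarrow> i < n \<Longrightarrow> j < k \<Longrightarrow>
    (A * B) $$ (i, j) = (\<Sum>t<m. A $$ (i, t) * B $$ (t, j))"
  by (auto simp: scalar_prod_def atLeast0LessThan intro!: sum.cong)

lemma index_mult_mat_vec_sum:
  "A \<in> carrier_mat n m \<Longrightarrow> v \<in> carrier_vec m \<Longrightarrow> i < n \<Longrightarrow>
    (A *\<^sub>v v) $ i = (\<Sum>t<m. A $$ (i, t) * v $ t)"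
  by (auto simp: scalar_prod_def atLeast0LessThan intro!: sum.cong)

lemma smult_mat_mult_vec: "dim_vec v = dim_col A \<Longrightarrow> (c \<cdot>\<^sub>m A) *\<^sub>v v = c \<cdot>\<^sub>v (A *\<^sub>v v)"
  by (rule eq_vecI) (auto simp: scalar_prod_def sum_distrib_left mult.assoc)

lemma one_minus_mult_vec:
  "(P :: complex mat) \<in> carrier_mat n n \<Longrightarrow> y \<in> carrier_vec n \<Longrightarrow> (1\<^sub>m n - P) *\<^sub>v y = y - P *\<^sub>v y"
  using minus_mult_distrib_mat_vec[of "1\<^sub>m n" n n P y] by simp

lemma mult_unit_vec:
  assumes "(A :: complex mat) \<in> carrier_mat n m" "k < m"
  shows "A *\<^sub>v unit_vec m k = col A k"
proof (rule eq_vecI)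
  fix i assume "i < dim_vec (col A k)"
  hence i: "i < n" using assms by simp
  have "(A *\<^sub>v unit_vec m k) $ i = (\<Sum>t<m. if t = k then A $$ (i, t) else 0)"
    using assms i by (subst index_mult_mat_vec_sum[of _ n m]) (auto simp: if_distrib cong: if_cong)
  thus "(A *\<^sub>v unit_vec m k) $ i = col A k $ i" using i assms by simp
qed (use assms in auto)

lemma eq_vecI_carrier:
  "v \<in> carrier_vec n \<Longrightarrow> w \<in> carrier_vec n \<Longrightarrow> (\<And>i. i < n \<Longrightarrow> v $ i = w $ i) \<Longrightarrow> v = w"
  by (rule eq_vecI) auto

lemma mat_eq_mult_vecI:
  assumes "(A :: complex mat) \<in> carrier_mat n m" "B \<in> carrier_mat n m"
    and "\<And>x. x \<in> carrier_vec m \<Longrightarrow> A *\<^sub>v x = B *\<^sub>v x"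
  shows "A = B"
proof (rule eq_matI)
  fix i j assume "i < dim_row B" "j < dim_col B"
  hence ij: "i < n" "j < m" using assms by auto
  have "col A j = col B j" using assms(3)[of "unit_vec m j"] mult_unit_vec assms(1,2) ij by simp
  thus "A $$ (i, j) = B $$ (i, j)" using assms ij by (metis carrier_matD col_def index_vec)
qed (use assms in auto)

lemma cadj_dims [simp]: "dim_row (cadj A) = dim_col A" "dim_col (cadj A) = dim_row A"
  by (auto simp: cadj_def)

lemma cadj_carrier [simp, intro]: "A \<in> carrier_mat n m \<Longrightarrow> cadj A \<in> carrier_mat m n"
  by (auto simp: cadj_def)

lemma cadj_index [simp]: "i < dim_col A \<Longrightarrow> j < dim_row A \<Longrightarrow> cadj A $$ (i, j) = cnj (A $$ (j, i))"
  by (auto simp: cadj_def)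

lemma cadj_cadj [simp]: "cadj (cadj A) = A"
  by (rule eq_matI) (auto simp: cadj_def)

lemma cadj_mult:
  assumes "A \<in> carrier_mat n m" "B \<in> carrier_mat m k"
  shows "cadj (A * B) = cadj B * cadj A"
proof (rule eq_matI)
  fix i j assume "i < dim_row (cadj B * cadj A)" "j < dim_col (cadj B * cadj A)"
  hence ij: "i < k" "j < n" using assms by auto
  have "cadj (A * B) $$ (i, j) = cnj ((A * B) $$ (j, i))" using assms ij by simp
  also have "\<dots> = cnj (\<Sum>t<m. A $$ (j, t) * B $$ (t, i))"
    using assms ij by (subst index_mult_mat_sum) auto
  also have "\<dots> = (\<Sum>t<m. cadj B $$ (i, t) * cadj A $$ (t, j))"
    using assms ij by (auto simp: cnj_sum mult.commute intro!: sum.cong)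
  also have "\<dots> = (cadj B * cadj A) $$ (i, j)"
    using assms ij by (subst index_mult_mat_sum[of _ k m _ n]) auto
  finally show "cadj (A * B) $$ (i, j) = (cadj B * cadj A) $$ (i, j)" .
qed (use assms in auto)

lemma cadj_add: "A \<in> carrier_mat n m \<Longrightarrow> B \<in> carrier_mat n m \<Longrightarrow> cadj (A + B) = cadj A + cadj B"
  by (rule eq_matI) auto

lemma cadj_minus: "A \<in> carrier_mat n m \<Longrightarrow> B \<in> carrier_mat n m \<Longrightarrow> cadj (A - B) = cadj A - cadj B"
  by (rule eq_matI) auto

lemma cadj_smult: "cadj (c \<cdot>\<^sub>m A) = cnj c \<cdot>\<^sub>m cadj A"
  by (rule eq_matI) auto

lemma cadj_one [simp]: "cadj (1\<^sub>m n) = 1\<^sub>m n"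
  by (rule eq_matI) auto

lemma cinner_adj:
  assumes "A \<in> carrier_mat n m" "v \<in> carrier_vec n" "w \<in> carrier_vec m"
  shows "cinner v (A *\<^sub>v w) = cinner (cadj A *\<^sub>v v) w"
proof -
  have "cinner v (A *\<^sub>v w) = (\<Sum>i<n. \<Sum>t<m. cnj (v $ i) * A $$ (i, t) * w $ t)"
    using assms by (auto simp: cinner_def index_mult_mat_vec_sum sum_distrib_left mult.assoc
        simp del: index_mult_mat_vec intro!: sum.cong)
  also have "\<dots> = (\<Sum>t<m. \<Sum>i<n. cnj (v $ i) * A $$ (i, t) * w $ t)"
    by (rule sum.swap)
  also have "\<dots> = cinner (cadj A *\<^sub>v v) w"
    using assms by (auto simp: cinner_def index_mult_mat_vec_sum[of _ m n] cnj_sum sum_distrib_right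
        simp del: index_mult_mat_vec intro!: sum.cong)
  finally show ?thesis .
qed

lemma cinner_add_left:
  "dim_vec v1 = dim_vec w \<Longrightarrow> dim_vec v2 = dim_vec w \<Longrightarrow> cinner (v1 + v2) w = cinner v1 w + cinner v2 w"
  by (simp add: cinner_def distrib_right sum.distrib)

lemma cinner_add_right:
  "dim_vec w1 = dim_vec v \<Longrightarrow> dim_vec w2 = dim_vec v \<Longrightarrow> cinner v (w1 + w2) = cinner v w1 + cinner v w2"
  by (simp add: cinner_def distrib_left sum.distrib)

lemma cinner_minus_right:
  "dim_vec w1 = dim_vec v \<Longrightarrow> dim_vec w2 = dim_vec v \<Longrightarrow> cinner v (w1 - w2) = cinner v w1 - cinner v w2"
  by (simp add: cinner_def right_diff_distrib sum_subtractf)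

lemma cinner_smult_left: "cinner (c \<cdot>\<^sub>v v) w = cnj c * cinner v w"
  by (simp add: cinner_def sum_distrib_left mult.assoc)

lemma cinner_smult_right: "dim_vec w = dim_vec v \<Longrightarrow> cinner v (c \<cdot>\<^sub>v w) = c * cinner v w"
  by (simp add: cinner_def sum_distrib_left mult.left_commute)

lemma cinner_zero_left [simp]: "cinner (0\<^sub>v n) w = 0"
  by (simp add: cinner_def)

lemma cinner_zero_right [simp]: "dim_vec v = n \<Longrightarrow> cinner v (0\<^sub>v n) = 0"
  by (simp add: cinner_def)

lemma cinner_cnj: "dim_vec w = dim_vec v \<Longrightarrow> cinner w v = cnj (cinner v w)"
  unfolding cinner_def cnj_sum by (auto intro!: sum.cong)

lemma cinner_unit_vec:
  assumes "v \<in> carrier_vec n" "k < n"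
  shows "cinner (unit_vec n k) v = v $ k"
proof -
  have "cinner (unit_vec n k) v = (\<Sum>i<n. if i = k then v $ i else 0)"
    unfolding cinner_def using assms by (intro sum.cong) auto
  thus ?thesis using assms by simp
qed

lemma cinner_self: "cinner v v = of_real (\<Sum>i<dim_vec v. (cmod (v $ i))\<^sup>2)"
proof -
  have "\<And>z::complex. cnj z * z = of_real ((cmod z)\<^sup>2)"
    by (metis complex_norm_square mult.commute)
  thus ?thesis by (simp add: cinner_def)
qed

lemma cinner_self_ge0: "0 \<le> Re (cinner v v)"
  by (simp add: cinner_self sum_nonneg)

lemma cinner_self_eq_0: "cinner v v = 0 \<Longrightarrow> v = 0\<^sub>v (dim_vec v)"
proof -
  assume "cinner v v = 0"
  hence "(\<Sum>i<dim_vec v. (cmod (v $ i))\<^sup>2) = 0"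
    unfolding cinner_self by (metis of_real_eq_0_iff)
  hence "\<forall>i\<in>{..<dim_vec v}. (cmod (v $ i))\<^sup>2 = 0"
    by (subst sum_nonneg_eq_0_iff[symmetric]) auto
  thus ?thesis by (intro eq_vecI) auto
qed

lemma herm_form_real:
  assumes "A \<in> carrier_mat n n" "cadj A = A" "v \<in> carrier_vec n"
  shows "cinner v (A *\<^sub>v v) = of_real (Re (cinner v (A *\<^sub>v v)))"
proof -
  have "cinner v (A *\<^sub>v v) = cnj (cinner v (A *\<^sub>v v))"
    using cinner_adj[OF assms(1,3,3)] cinner_cnj[of v "A *\<^sub>v v"] assms by simp
  thus ?thesis by (metis Reals_cnj_iff complex_is_Real_iff of_real_Re)
qed

lemma smult_mat_kernel:
  assumes X: "(X :: complex mat) \<in> carrier_mat n n" and w: "w \<in> carrier_vec n" and c: "c \<noteq> 0"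
    and z: "(c \<cdot>\<^sub>m X) *\<^sub>v w = 0\<^sub>v n"
  shows "X *\<^sub>v w = 0\<^sub>v n"
proof (rule eq_vecI_carrier[of _ n])
  fix i assume i: "i < n"
  have "c * (X *\<^sub>v w) $ i = ((c \<cdot>\<^sub>m X) *\<^sub>v w) $ i" using X w i by (simp add: smult_mat_mult_vec)
  also have "\<dots> = 0" using z i by simp
  finally show "(X *\<^sub>v w) $ i = 0\<^sub>v n $ i" using c i by simp
qed (use X w in auto)

section \<open>Positive semidefinite matrices\<close>

lemma psdI:
  "A \<in> carrier_mat n n \<Longrightarrow> cadj A = A \<Longrightarrow> (\<And>v. v \<in> carrier_vec n \<Longrightarrow> 0 \<le> Re (cinner v (A *\<^sub>v v)))
    \<Longrightarrow> psd n A"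
  by (simp add: psd_def)

lemma psd_carrier: "psd n A \<Longrightarrow> A \<in> carrier_mat n n"
  by (simp add: psd_def)

lemma psd_herm: "psd n A \<Longrightarrow> cadj A = A"
  by (simp add: psd_def)

lemma psd_form: "psd n A \<Longrightarrow> v \<in> carrier_vec n \<Longrightarrow> 0 \<le> Re (cinner v (A *\<^sub>v v))"
  by (simp add: psd_def)

lemma psd_add:
  assumes "psd n A" "psd n B"
  shows "psd n (A + B)"
proof (rule psdI)
  have A: "A \<in> carrier_mat n n" and B: "B \<in> carrier_mat n n" using assms by (auto simp: psd_def)
  thus "A + B \<in> carrier_mat n n" by simp
  show "cadj (A + B) = A + B" using A B assms by (simp add: cadj_add psd_herm)
  fix v :: "complex vec" assume v: "v \<in> carrier_vec n"
  have "cinner v ((A + B) *\<^sub>v v) = cinner v (A *\<^sub>v v) + cinner v (B *\<^sub>v v)"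
    using A B v by (simp add: add_mult_distrib_mat_vec cinner_add_right)
  thus "0 \<le> Re (cinner v ((A + B) *\<^sub>v v))" using psd_form[OF assms(1) v] psd_form[OF assms(2) v] by simp
qed

lemma psd_smult:
  assumes "psd n A" "0 \<le> c"
  shows "psd n (complex_of_real c \<cdot>\<^sub>m A)"
proof (rule psdI)
  have A: "A \<in> carrier_mat n n" using assms by (auto simp: psd_def)
  thus "complex_of_real c \<cdot>\<^sub>m A \<in> carrier_mat n n" by simp
  show "cadj (complex_of_real c \<cdot>\<^sub>m A) = complex_of_real c \<cdot>\<^sub>m A"
    using assms by (simp add: cadj_smult psd_herm)
  fix v :: "complex vec" assume v: "v \<in> carrier_vec n"
  have "cinner v ((complex_of_real c \<cdot>\<^sub>m A) *\<^sub>v v) = complex_of_real c * cinner v (A *\<^sub>v v)"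
    using A v by (simp add: smult_mat_mult_vec cinner_smult_right)
  thus "0 \<le> Re (cinner v ((complex_of_real c \<cdot>\<^sub>m A) *\<^sub>v v))" using psd_form[OF assms(1) v] assms(2) by simp
qed

lemma psd_zero: "psd n (0\<^sub>m n n)"
  by (rule psdI) (auto simp: cinner_def)

lemma psd_one: "psd n (1\<^sub>m n)"
  by (rule psdI) (auto simp: cinner_self_ge0)

lemma herm_form_expand:
  assumes A: "A \<in> carrier_mat n n" "cadj A = A" and x: "x \<in> carrier_vec n" and y: "y \<in> carrier_vec n"
  shows "cinner (y + s \<cdot>\<^sub>v x) (A *\<^sub>v (y + s \<cdot>\<^sub>v x)) =
    cinner y (A *\<^sub>v y) + s * cnj (cinner x (A *\<^sub>v y)) + cnj s * cinner x (A *\<^sub>v y) + s * cnj s * cinner x (A *\<^sub>v x)"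
proof -
  have yx: "cinner y (A *\<^sub>v x) = cnj (cinner x (A *\<^sub>v y))"
    using cinner_adj[OF A(1) y x] cinner_cnj[of x "A *\<^sub>v y"] A x y by simp
  have "A *\<^sub>v (y + s \<cdot>\<^sub>v x) = A *\<^sub>v y + s \<cdot>\<^sub>v (A *\<^sub>v x)"
    using A x y by (simp add: mult_add_distrib_mat_vec mult_mat_vec)
  moreover have "cinner (y + s \<cdot>\<^sub>v x) (A *\<^sub>v y + s \<cdot>\<^sub>v (A *\<^sub>v x)) =
     cinner y (A *\<^sub>v y) + s * cinner y (A *\<^sub>v x) + cnj s * cinner x (A *\<^sub>v y) + cnj s * (s * cinner x (A *\<^sub>v x))"
    using A x y by (simp add: cinner_add_left cinner_add_right cinner_smult_left cinner_smult_right algebra_simps)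
  ultimately show ?thesis using yx by (simp add: algebra_simps)
qed

lemma mult_cnj_self: "s * cnj s = complex_of_real ((cmod s)\<^sup>2)"
  using complex_norm_square[of s] by simp

lemma psd_cauchy_schwarz:
  assumes P: "psd n A" and x: "x \<in> carrier_vec n" and y: "y \<in> carrier_vec n"
    and a: "0 < Re (cinner x (A *\<^sub>v x))"
  shows "(cmod (cinner x (A *\<^sub>v y)))\<^sup>2 \<le> Re (cinner x (A *\<^sub>v x)) * Re (cinner y (A *\<^sub>v y))"
proof -
  have A: "A \<in> carrier_mat n n" "cadj A = A" using P by (auto simp: psd_def)
  define a where "a = Re (cinner x (A *\<^sub>v x))"
  define c where "c = cinner x (A *\<^sub>v y)"
  define s where "s = - c / complex_of_real a"
  have a0: "0 < a" using a unfolding a_def .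
  have ax: "cinner x (A *\<^sub>v x) = complex_of_real a" unfolding a_def using herm_form_real[OF A x] .
  have "0 \<le> Re (cinner (y + s \<cdot>\<^sub>v x) (A *\<^sub>v (y + s \<cdot>\<^sub>v x)))"
    using P x y by (intro psd_form) auto
  also have "cinner (y + s \<cdot>\<^sub>v x) (A *\<^sub>v (y + s \<cdot>\<^sub>v x)) =
    cinner y (A *\<^sub>v y) + s * cnj c + cnj s * c + s * cnj s * complex_of_real a"
    using herm_form_expand[OF A x y, of s] ax unfolding c_def by simp
  also have "s * cnj c = - complex_of_real ((cmod c)\<^sup>2 / a)"
    unfolding s_def using a0 by (simp add: mult_cnj_self field_simps)
  also have "cnj s * c = - complex_of_real ((cmod c)\<^sup>2 / a)"
    unfolding s_def using a0 by (simp add: mult_cnj_self field_simps mult.commute[of c])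
  also have "s * cnj s * complex_of_real a = complex_of_real ((cmod c)\<^sup>2 / a)"
  proof -
    have "s * cnj s = complex_of_real ((cmod c)\<^sup>2 / a\<^sup>2)"
      using mult_cnj_self[of s] a0 unfolding s_def by (simp add: norm_divide power_divide)
    moreover have "(cmod c)\<^sup>2 / a\<^sup>2 * a = (cmod c)\<^sup>2 / a" using a0 by (simp add: power2_eq_square)
    ultimately show ?thesis by (metis of_real_mult)
  qed
  finally have "(cmod c)\<^sup>2 / a \<le> Re (cinner y (A *\<^sub>v y))" by simp
  thus ?thesis using a0 unfolding a_def[symmetric] c_def[symmetric] by (simp add: divide_le_eq mult.commute)
qed

lemma psd_form_zero:
  assumes P: "psd n A" and v: "v \<in> carrier_vec n" and z: "Re (cinner v (A *\<^sub>v v)) = 0"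
  shows "A *\<^sub>v v = 0\<^sub>v n"
proof (rule ccontr)
  assume ne: "A *\<^sub>v v \<noteq> 0\<^sub>v n"
  have A: "A \<in> carrier_mat n n" "cadj A = A" using P by (auto simp: psd_def)
  define w where "w = A *\<^sub>v v"
  have w: "w \<in> carrier_vec n" unfolding w_def using A v by simp
  define q where "q = Re (cinner w w)"
  define c where "c = Re (cinner w (A *\<^sub>v w))"
  define t where "t = q / (c + 1)"
  have ww: "cinner w w = complex_of_real q" unfolding q_def using cinner_self[of w] by simp
  have "q \<noteq> 0"
  proof
    assume "q = 0"
    hence "w = 0\<^sub>v (dim_vec w)" using ww cinner_self_eq_0[of w] by simp
    thus False using ne A(1) unfolding w_def by simp
  qed
  hence q0: "0 < q" unfolding q_def using cinner_self_ge0[of w] by simp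
  have c0: "0 \<le> c" unfolding c_def using psd_form[OF P w] .
  have t0: "0 < t" unfolding t_def using q0 c0 by simp
  have vv: "cinner v (A *\<^sub>v v) = 0" using herm_form_real[OF A v] z by simp
  \<comment> \<open>moving from \<open>v\<close> a little in the direction \<open>-A v\<close> would make the form negative\<close>
  have "0 \<le> Re (cinner (v + complex_of_real (- t) \<cdot>\<^sub>v w) (A *\<^sub>v (v + complex_of_real (- t) \<cdot>\<^sub>v w)))"
    using P v w by (intro psd_form) auto
  also have "\<dots> = Re (complex_of_real (- t) * complex_of_real q + complex_of_real (- t) * complex_of_real q
      + complex_of_real (- t) * complex_of_real (- t) * cinner w (A *\<^sub>v w))"
    using herm_form_expand[OF A w v, of "complex_of_real (- t)"] vv ww unfolding w_def by simp
  also have "\<dots> = - 2 * t * q + t * t * c" unfolding c_def by simp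
  finally have "2 * t * q \<le> t * (t * c)" by (simp add: algebra_simps)
  hence "2 * q \<le> t * c" using t0 by simp
  moreover have "t * c < q"
  proof -
    have "t * c = q * (c / (c + 1))" unfolding t_def by simp
    also have "\<dots> < q * 1" using q0 c0 by (intro mult_strict_left_mono) auto
    finally show ?thesis by simp
  qed
  ultimately show False using q0 by simp
qed

lemma psd_add_kernel:
  assumes "psd n A" "psd n B" "v \<in> carrier_vec n" "(A + B) *\<^sub>v v = 0\<^sub>v n"
  shows "A *\<^sub>v v = 0\<^sub>v n" "B *\<^sub>v v = 0\<^sub>v n"
proof -
  have A: "A \<in> carrier_mat n n" and B: "B \<in> carrier_mat n n" using assms by (auto simp: psd_def)
  have "cinner v (A *\<^sub>v v) + cinner v (B *\<^sub>v v) = cinner v ((A + B) *\<^sub>v v)"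
    using A B assms(3) by (simp add: add_mult_distrib_mat_vec cinner_add_right)
  also have "\<dots> = 0" using assms(3,4) by auto
  finally have "Re (cinner v (A *\<^sub>v v)) + Re (cinner v (B *\<^sub>v v)) = 0"
    by (metis plus_complex.sel(1) zero_complex.sel(1))
  moreover have "0 \<le> Re (cinner v (A *\<^sub>v v))" "0 \<le> Re (cinner v (B *\<^sub>v v))"
    using assms psd_form by auto
  ultimately show "A *\<^sub>v v = 0\<^sub>v n" "B *\<^sub>v v = 0\<^sub>v n"
    using psd_form_zero[OF assms(1,3)] psd_form_zero[OF assms(2,3)] by auto
qed

lemma psd_diag:
  assumes "psd n A" "k < n"
  shows "A $$ (k, k) = complex_of_real (Re (A $$ (k, k)))" "0 \<le> Re (A $$ (k, k))"
proof -
  have A: "A \<in> carrier_mat n n" "cadj A = A" using assms by (auto simp: psd_def)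
  have e: "cinner (unit_vec n k) (A *\<^sub>v unit_vec n k) = A $$ (k, k)"
    using A assms by (simp add: mult_unit_vec cinner_unit_vec)
  show "A $$ (k, k) = complex_of_real (Re (A $$ (k, k)))"
    using herm_form_real[OF A, of "unit_vec n k"] e assms by simp
  show "0 \<le> Re (A $$ (k, k))" using psd_form[OF assms(1), of "unit_vec n k"] e assms by simp
qed

lemma psd_diag_zero:
  assumes "psd n A" "k < n" "A $$ (k, k) = 0" "j < n"
  shows "A $$ (j, k) = 0" "A $$ (k, j) = 0"
proof -
  have A: "A \<in> carrier_mat n n" "cadj A = A" using assms by (auto simp: psd_def)
  have "A *\<^sub>v unit_vec n k = 0\<^sub>v n"
    using psd_form_zero[OF assms(1), of "unit_vec n k"] A assms by (simp add: mult_unit_vec cinner_unit_vec)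
  hence "col A k = 0\<^sub>v n" using mult_unit_vec[OF A(1) assms(2)] by simp
  moreover have "A $$ (j, k) = col A k $ j" using A assms by simp
  ultimately show jk: "A $$ (j, k) = 0" using assms by simp
  have "A $$ (k, j) = cadj A $$ (k, j)" using A by simp
  also have "\<dots> = cnj (A $$ (j, k))" using A(1) assms(2,4) by simp
  finally show "A $$ (k, j) = 0" using jk by simp
qed

definition outer :: "complex vec \<Rightarrow> complex mat" where
  "outer u = mat (dim_vec u) (dim_vec u) (\<lambda>(i, j). u $ i * cnj (u $ j))"

lemma outer_dims [simp]: "dim_row (outer u) = dim_vec u" "dim_col (outer u) = dim_vec u"
  by (auto simp: outer_def)

lemma outer_carrier [simp]: "u \<in> carrier_vec n \<Longrightarrow> outer u \<in> carrier_mat n n"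
  by (auto simp: outer_def)

lemma cadj_outer: "cadj (outer u) = outer u"
  by (rule eq_matI) (auto simp: outer_def)

lemma outer_mult_vec:
  assumes "u \<in> carrier_vec n" "v \<in> carrier_vec n"
  shows "outer u *\<^sub>v v = cinner u v \<cdot>\<^sub>v u"
proof (rule eq_vecI)
  fix i assume "i < dim_vec (cinner u v \<cdot>\<^sub>v u)"
  hence i: "i < n" using assms by simp
  have "(outer u *\<^sub>v v) $ i = (\<Sum>t<n. u $ i * cnj (u $ t) * v $ t)"
    using assms i by (subst index_mult_mat_vec_sum[of _ n n]) (auto simp: outer_def)
  also have "\<dots> = cinner u v * u $ i"
    using assms by (simp add: cinner_def sum_distrib_left sum_distrib_right mult.commute mult.left_commute)
  finally show "(outer u *\<^sub>v v) $ i = (cinner u v \<cdot>\<^sub>v u) $ i" using i assms by simp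
qed (use assms in \<open>auto simp: outer_def\<close>)

lemma append_col_gram:
  assumes Y: "Y \<in> carrier_mat n m" and u: "u \<in> carrier_vec n"
  defines "X \<equiv> mat n (Suc m) (\<lambda>(i, j). if j < m then Y $$ (i, j) else u $ i)"
  shows "X \<in> carrier_mat n (Suc m)" "X * cadj X = Y * cadj Y + outer u"
proof -
  show X: "X \<in> carrier_mat n (Suc m)" unfolding X_def by simp
  show "X * cadj X = Y * cadj Y + outer u"
  proof (rule eq_matI)
    fix i j assume "i < dim_row (Y * cadj Y + outer u)" "j < dim_col (Y * cadj Y + outer u)"
    hence ij: "i < n" "j < n" using Y u by (auto simp: outer_def)
    have "(X * cadj X) $$ (i, j) = (\<Sum>t<m. X $$ (i, t) * cadj X $$ (t, j)) + X $$ (i, m) * cadj X $$ (m, j)"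
      using X ij by (subst index_mult_mat_sum[of _ n "Suc m" _ n]) auto
    also have "(\<Sum>t<m. X $$ (i, t) * cadj X $$ (t, j)) = (Y * cadj Y) $$ (i, j)"
      using X Y ij by (subst index_mult_mat_sum[of _ n m _ n]) (auto simp: X_def intro!: sum.cong)
    also have "X $$ (i, m) * cadj X $$ (m, j) = outer u $$ (i, j)"
      using X u ij by (auto simp: X_def outer_def)
    finally show "(X * cadj X) $$ (i, j) = (Y * cadj Y + outer u) $$ (i, j)"
      using Y u ij by (simp add: outer_def)
  qed (use X Y u in \<open>auto simp: outer_def\<close>)
qed

definition pivot_col :: "complex mat \<Rightarrow> nat \<Rightarrow> complex vec" where
  "pivot_col A k = complex_of_real (1 / sqrt (Re (A $$ (k, k)))) \<cdot>\<^sub>v col A k"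

lemma pivot_col_carrier: "A \<in> carrier_mat n n \<Longrightarrow> k < n \<Longrightarrow> pivot_col A k \<in> carrier_vec n"
  by (simp add: pivot_col_def)

lemma psd_minus_outer_pivot_col:
  assumes P: "psd n A" and k: "k < n" and a: "0 < Re (A $$ (k, k))"
  shows "psd n (A - outer (pivot_col A k))"
proof (rule psdI)
  define a where "a = Re (A $$ (k, k))"
  define u where "u = pivot_col A k"
  have A: "A \<in> carrier_mat n n" "cadj A = A" using P by (auto simp: psd_def)
  have u: "u \<in> carrier_vec n" unfolding u_def using pivot_col_carrier[OF A(1) k] .
  show "A - outer u \<in> carrier_mat n n" using outer_carrier[OF u] by (rule minus_carrier_mat)
  show "cadj (A - outer u) = A - outer u" using A u by (simp add: cadj_minus cadj_outer)
  fix v :: "complex vec" assume v: "v \<in> carrier_vec n"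
  have "cinner v ((A - outer u) *\<^sub>v v) = cinner v (A *\<^sub>v v) - cinner u v * cnj (cinner u v)"
    using A u v by (simp add: minus_mult_distrib_mat_vec cinner_minus_right outer_mult_vec
        cinner_smult_right cinner_cnj[of u v])
  hence e: "Re (cinner v ((A - outer u) *\<^sub>v v)) = Re (cinner v (A *\<^sub>v v)) - (cmod (cinner u v))\<^sup>2"
    by (simp add: mult_cnj_self)
  have "cinner (col A k) v = cinner (unit_vec n k) (A *\<^sub>v v)"
    using cinner_adj[of "cadj A" n n "unit_vec n k" v] A v k by (simp add: mult_unit_vec)
  hence "(cmod (cinner u v))\<^sup>2 = (cmod (cinner (unit_vec n k) (A *\<^sub>v v)))\<^sup>2 / a"
    using a unfolding u_def pivot_col_def a_def
    by (simp add: cinner_smult_left norm_mult norm_divide power_divide power_mult_distrib)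
  also have "\<dots> \<le> Re (cinner v (A *\<^sub>v v))"
    using psd_cauchy_schwarz[OF P _ v, of "unit_vec n k"] a k A
    by (simp add: a_def mult_unit_vec cinner_unit_vec divide_le_eq mult.commute)
  finally show "0 \<le> Re (cinner v ((A - outer u) *\<^sub>v v))" using e by simp
qed

lemma diag_support_minus_outer_pivot_col:
  assumes P: "psd n A" and k: "k < n" and nz: "A $$ (k, k) \<noteq> 0"
  shows "{i. i < n \<and> (A - outer (pivot_col A k)) $$ (i, i) \<noteq> 0} \<subset> {i. i < n \<and> A $$ (i, i) \<noteq> 0}"
proof -
  define a where "a = Re (A $$ (k, k))"
  define u where "u = pivot_col A k"
  have A: "A \<in> carrier_mat n n" using P by (simp add: psd_def)
  have Akk: "A $$ (k, k) = complex_of_real a" unfolding a_def using psd_diag[OF P k] by simp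
  hence "a \<noteq> 0" using nz by auto
  hence a0: "0 < a" using psd_diag(2)[OF P k] unfolding a_def by linarith
  have u: "u \<in> carrier_vec n" unfolding u_def using A k by (rule pivot_col_carrier)
  have diag: "(A - outer u) $$ (i, i) = A $$ (i, i) - complex_of_real ((cmod (A $$ (i, k)))\<^sup>2 / a)"
    if i: "i < n" for i
  proof -
    have "(A - outer u) $$ (i, i) = A $$ (i, i) - complex_of_real ((cmod (u $ i))\<^sup>2)"
      using A u i by (simp add: outer_def mult_cnj_self)
    also have "cmod (u $ i) = cmod (A $$ (i, k)) / sqrt a"
      using A i k a0 unfolding u_def pivot_col_def a_def by (simp add: norm_mult norm_divide)
    finally show ?thesis using a0 by (simp add: power_divide)
  qed
  have "(A - outer u) $$ (i, i) = 0" if "i < n" "A $$ (i, i) = 0" for i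
    using diag[OF that(1)] psd_diag_zero(2)[OF P that k] that(2) by simp
  moreover have "(A - outer u) $$ (k, k) = 0"
    using diag[OF k] Akk a0 by (simp add: power2_eq_square)
  ultimately show ?thesis using k nz unfolding u_def by blast
qed

lemma psd_gram_factor: "psd n A \<Longrightarrow> \<exists>m X. X \<in> carrier_mat n m \<and> A = X * cadj X"
proof (induction "card {i. i < n \<and> A $$ (i, i) \<noteq> 0}" arbitrary: A rule: less_induct)
  case less
  have A: "A \<in> carrier_mat n n" using less.prems by (simp add: psd_def)
  show ?case
  proof (cases "\<exists>k<n. A $$ (k, k) \<noteq> 0")
    case False
    have "A = 0\<^sub>m n 0 * cadj (0\<^sub>m n 0)"
    proof (rule eq_matI)
      fix i j assume "i < dim_row (0\<^sub>m n 0 * cadj (0\<^sub>m n 0 :: complex mat))" "j < dim_col (0\<^sub>m n 0 * cadj (0\<^sub>m n 0 :: complex mat))"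
      hence ij: "i < n" "j < n" by auto
      have "A $$ (i, j) = 0" using psd_diag_zero(1)[OF less.prems ij(2) _ ij(1)] False ij by auto
      thus "A $$ (i, j) = (0\<^sub>m n 0 * cadj (0\<^sub>m n 0)) $$ (i, j)" using ij by (simp add: scalar_prod_def)
    qed (use A in auto)
    thus ?thesis by (intro exI[of _ 0] exI[of _ "0\<^sub>m n 0"]) auto
  next
    case True
    then obtain k where k: "k < n" "A $$ (k, k) \<noteq> 0" by blast
    define u where "u = pivot_col A k"
    have u: "u \<in> carrier_vec n" unfolding u_def using A k(1) by (rule pivot_col_carrier)
    have "0 < Re (A $$ (k, k))"
      using k psd_diag[OF less.prems k(1)] by (metis less_eq_real_def of_real_0)
    hence "psd n (A - outer u)" unfolding u_def by (rule psd_minus_outer_pivot_col[OF less.prems k(1)])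
    moreover have "card {i. i < n \<and> (A - outer u) $$ (i, i) \<noteq> 0} < card {i. i < n \<and> A $$ (i, i) \<noteq> 0}"
      unfolding u_def using diag_support_minus_outer_pivot_col[OF less.prems k] by (intro psubset_card_mono) auto
    ultimately obtain m Y where Y: "Y \<in> carrier_mat n m" "A - outer u = Y * cadj Y"
      using less.hyps by blast
    define X where "X = mat n (Suc m) (\<lambda>(i, j). if j < m then Y $$ (i, j) else u $ i)"
    have X: "X \<in> carrier_mat n (Suc m)" "X * cadj X = Y * cadj Y + outer u"
      using append_col_gram[OF Y(1) u] unfolding X_def by auto
    have "A = (A - outer u) + outer u" using A u by (intro eq_matI) (auto simp: outer_def)
    also have "\<dots> = X * cadj X" using X Y by simp
    finally show ?thesis using X by blast
  qed
qed

lemma psd_gram: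
  assumes "X \<in> carrier_mat n m"
  shows "psd n (X * cadj X)"
proof (rule psdI)
  show "X * cadj X \<in> carrier_mat n n" using assms by auto
  show "cadj (X * cadj X) = X * cadj X" using assms by (simp add: cadj_mult[of _ n m _ n])
  fix v :: "complex vec" assume v: "v \<in> carrier_vec n"
  have cv: "cadj X *\<^sub>v v \<in> carrier_vec m" using assms v by (intro mult_mat_vec_carrier) auto
  have "cinner v ((X * cadj X) *\<^sub>v v) = cinner v (X *\<^sub>v (cadj X *\<^sub>v v))" using assms v
    by (subst assoc_mult_mat_vec[of _ n m _ n]) auto
  also have "\<dots> = cinner (cadj X *\<^sub>v v) (cadj X *\<^sub>v v)" using cinner_adj[OF assms v cv] by simp
  finally show "0 \<le> Re (cinner v ((X * cadj X) *\<^sub>v v))" using cinner_self_ge0 by simp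
qed

lemma ctrace_diff_smult:
  "A \<in> carrier_mat n n \<Longrightarrow> B \<in> carrier_mat n n \<Longrightarrow> ctrace (a \<cdot>\<^sub>m A - b \<cdot>\<^sub>m B) = a * ctrace A - b * ctrace B"
  by (simp add: ctrace_def sum_subtractf sum_distrib_left)

lemma psd_trace_nonneg:
  assumes "psd n A"
  shows "0 \<le> Re (ctrace A)"
proof -
  have "dim_row A = n" using psd_carrier[OF assms] by simp
  hence "Re (ctrace A) = (\<Sum>i<n. Re (A $$ (i, i)))" by (simp add: ctrace_def)
  also have "\<dots> \<ge> 0" using psd_diag(2)[OF assms] by (intro sum_nonneg) auto
  finally show ?thesis .
qed

text \<open>With \<open>E = X X\<^sup>*\<close>, the trace of \<open>M E\<close> is the sum of the nonnegative values of the form of \<open>M\<close>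
  at the columns of \<open>X\<close>; if it vanishes, each column lies in the kernel of \<open>M\<close>.\<close>

lemma psd_trace_mult_zero:
  assumes M: "psd n M" and E: "psd n E" and tr: "ctrace (M * E) = 0"
  shows "M * E = 0\<^sub>m n n"
proof -
  obtain m X where X: "X \<in> carrier_mat n m" "E = X * cadj X" using psd_gram_factor[OF E] by blast
  have Mc: "M \<in> carrier_mat n n" using M by (simp add: psd_def)
  have cX: "cadj X \<in> carrier_mat m n" using X by simp
  have MX: "M * X \<in> carrier_mat n m" using Mc X by simp
  have ME: "M * E = (M * X) * cadj X" unfolding X(2) using assoc_mult_mat[OF Mc X(1) cX] by simp
  have "ctrace (M * E) = (\<Sum>i<n. \<Sum>k<m. (M * X) $$ (i, k) * cadj X $$ (k, i))"
    unfolding ME ctrace_def using MX cX by (intro sum.cong refl) (auto simp: index_mult_mat_sum[OF MX cX])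
  also have "\<dots> = (\<Sum>k<m. \<Sum>i<n. cnj (col X k $ i) * (M *\<^sub>v col X k) $ i)"
    using X Mc by (subst sum.swap) (auto intro!: sum.cong simp: mult.commute)
  also have "\<dots> = (\<Sum>k<m. cinner (col X k) (M *\<^sub>v col X k))"
    using X by (auto simp: cinner_def intro!: sum.cong)
  finally have s: "(\<Sum>k<m. Re (cinner (col X k) (M *\<^sub>v col X k))) = 0"
    using tr by (metis Re_sum zero_complex.sel(1))
  have nn: "\<And>k. k \<in> {..<m} \<Longrightarrow> 0 \<le> Re (cinner (col X k) (M *\<^sub>v col X k))"
    using X by (intro psd_form[OF M]) auto
  have col0: "M *\<^sub>v col X k = 0\<^sub>v n" if k: "k < m" for k
  proof (rule psd_form_zero[OF M])
    show "col X k \<in> carrier_vec n" using X k by simp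
    show "Re (cinner (col X k) (M *\<^sub>v col X k)) = 0"
      using sum_nonneg_eq_0_iff[of "{..<m}" "\<lambda>k. Re (cinner (col X k) (M *\<^sub>v col X k))"] s nn k by auto
  qed
  have MXz: "M * X = 0\<^sub>m n m"
  proof (rule eq_matI)
    fix i k assume "i < dim_row (0\<^sub>m n m :: complex mat)" "k < dim_col (0\<^sub>m n m :: complex mat)"
    hence ik: "i < n" "k < m" by auto
    hence "(M *\<^sub>v col X k) $ i = 0" using col0 by simp
    thus "(M * X) $$ (i, k) = 0\<^sub>m n m $$ (i, k)" using ik Mc X by simp
  qed (use MX in auto)
  show ?thesis unfolding ME MXz using left_mult_zero_mat[OF cX] .
qed

section \<open>Kronecker products\<close>

lemma index_pair_less: "(p::nat) < a \<Longrightarrow> q < b \<Longrightarrow> p * b + q < a * b"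
proof -
  assume "p < a" "q < b"
  hence "p * b + q < p * b + b" by simp
  also have "\<dots> = Suc p * b" by simp
  also have "\<dots> \<le> a * b" using \<open>p < a\<close> by (intro mult_right_mono) auto
  finally show ?thesis .
qed

lemma mod_less_of_less_mult: "(i::nat) < a * b \<Longrightarrow> i mod b < b"
  by (cases "b = 0") auto

lemma sum_lessThan_mult: "(\<Sum>t<(a::nat) * b. f t) = (\<Sum>p<a. \<Sum>q<b. f (p * b + q))"
proof -
  have "(\<Sum>p<a. \<Sum>q<b. f (p * b + q)) = (\<Sum>x\<in>{..<a} \<times> {..<b}. f (fst x * b + snd x))"
    by (simp add: sum.cartesian_product split_def)
  also have "\<dots> = (\<Sum>t<a * b. f t)"
    by (rule sum.reindex_bij_witness[where i="\<lambda>t. (t div b, t mod b)" and j="\<lambda>x. fst x * b + snd x"])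
      (auto simp: less_mult_imp_div_less mod_less_of_less_mult index_pair_less)
  finally show ?thesis by simp
qed

lemma index_pair_div_mod: "(q::nat) < b \<Longrightarrow> (p * b + q) div b = p" "(q::nat) < b \<Longrightarrow> (p * b + q) mod b = q"
  by auto

lemma kron_dims [simp]: "dim_row (kron A B) = dim_row A * dim_row B" "dim_col (kron A B) = dim_col A * dim_col B"
  by (auto simp: kron_def)

lemma kron_carrier [simp, intro]:
  "A \<in> carrier_mat na ma \<Longrightarrow> B \<in> carrier_mat nb mb \<Longrightarrow> kron A B \<in> carrier_mat (na * nb) (ma * mb)"
  by (auto simp: kron_def)

lemma kron_index:
  "A \<in> carrier_mat na ma \<Longrightarrow> B \<in> carrier_mat nb mb \<Longrightarrow> i < na * nb \<Longrightarrow> j < ma * mb \<Longrightarrow>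
    kron A B $$ (i, j) = A $$ (i div nb, j div mb) * B $$ (i mod nb, j mod mb)"
  by (auto simp: kron_def)

lemma kron_mult:
  assumes A: "A \<in> carrier_mat na ma" and B: "B \<in> carrier_mat nb mb"
    and C: "C \<in> carrier_mat ma ka" and D: "D \<in> carrier_mat mb kb"
  shows "kron A B * kron C D = kron (A * C) (B * D)"
proof (rule eq_matI)
  fix i j assume "i < dim_row (kron (A * C) (B * D))" "j < dim_col (kron (A * C) (B * D))"
  hence ij: "i < na * nb" "j < ka * kb" using A B C D by auto
  have i1: "i div nb < na" "i mod nb < nb" "j div kb < ka" "j mod kb < kb" using ij less_mult_imp_div_less mod_less_of_less_mult by auto
  have "(kron A B * kron C D) $$ (i, j) = (\<Sum>t<ma * mb. kron A B $$ (i, t) * kron C D $$ (t, j))"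
    using A B C D ij by (intro index_mult_mat_sum[of _ "na * nb" "ma * mb" _ "ka * kb"]) auto
  also have "\<dots> = (\<Sum>p<ma. \<Sum>q<mb. kron A B $$ (i, p * mb + q) * kron C D $$ (p * mb + q, j))"
    by (rule sum_lessThan_mult)
  also have "\<dots> = (\<Sum>p<ma. \<Sum>q<mb. (A $$ (i div nb, p) * C $$ (p, j div kb)) * (B $$ (i mod nb, q) * D $$ (q, j mod kb)))"
    using A B C D ij index_pair_less by (intro sum.cong refl) (auto simp: kron_index index_pair_div_mod)
  also have "\<dots> = (\<Sum>p<ma. A $$ (i div nb, p) * C $$ (p, j div kb)) * (\<Sum>q<mb. B $$ (i mod nb, q) * D $$ (q, j mod kb))"
    by (simp add: sum_product)
  also have "\<dots> = (A * C) $$ (i div nb, j div kb) * (B * D) $$ (i mod nb, j mod kb)"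
    by (simp only: index_mult_mat_sum[OF A C i1(1) i1(3)] index_mult_mat_sum[OF B D i1(2) i1(4)])
  also have "\<dots> = kron (A * C) (B * D) $$ (i, j)"
    using A B C D ij by (subst kron_index[of _ na ka _ nb kb]) auto
  finally show "(kron A B * kron C D) $$ (i, j) = kron (A * C) (B * D) $$ (i, j)" .
qed (use A B C D in auto)

lemma cadj_kron:
  assumes A: "A \<in> carrier_mat na ma" and B: "B \<in> carrier_mat nb mb"
  shows "cadj (kron A B) = kron (cadj A) (cadj B)"
proof (rule eq_matI)
  fix i j assume "i < dim_row (kron (cadj A) (cadj B))" "j < dim_col (kron (cadj A) (cadj B))"
  hence ij: "i < ma * mb" "j < na * nb" using A B by auto
  have i1: "i div mb < ma" "i mod mb < mb" "j div nb < na" "j mod nb < nb" using ij less_mult_imp_div_less mod_less_of_less_mult by auto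
  show "cadj (kron A B) $$ (i, j) = kron (cadj A) (cadj B) $$ (i, j)"
    using A B ij i1 by (simp add: kron_index[of _ na ma _ nb mb] kron_index[of _ ma na _ mb nb])
qed (use A B in auto)

lemma kron_one: "kron (1\<^sub>m a) (1\<^sub>m b) = 1\<^sub>m (a * b)"
proof (rule eq_matI)
  fix i j assume "i < dim_row (1\<^sub>m (a * b) :: complex mat)" "j < dim_col (1\<^sub>m (a * b) :: complex mat)"
  hence ij: "i < a * b" "j < a * b" by auto
  have i1: "i div b < a" "i mod b < b" "j div b < a" "j mod b < b" using ij less_mult_imp_div_less mod_less_of_less_mult by auto
  have "(i div b = j div b \<and> i mod b = j mod b) = (i = j)" by (metis div_mult_mod_eq)
  thus "kron (1\<^sub>m a) (1\<^sub>m b) $$ (i, j) = (1\<^sub>m (a * b) :: complex mat) $$ (i, j)"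
    using ij i1 by (auto simp: kron_index[of _ a a _ b b])
qed auto

lemma psd_kron:
  assumes "psd na A" "psd nb B"
  shows "psd (na * nb) (kron A B)"
proof -
  obtain m1 X where X: "X \<in> carrier_mat na m1" "A = X * cadj X" using psd_gram_factor[OF assms(1)] by blast
  obtain m2 Y where Y: "Y \<in> carrier_mat nb m2" "B = Y * cadj Y" using psd_gram_factor[OF assms(2)] by blast
  have "kron A B = kron X Y * kron (cadj X) (cadj Y)"
    using X Y by (simp add: kron_mult[of _ na m1 _ nb m2 _ na _ nb])
  also have "\<dots> = kron X Y * cadj (kron X Y)" using X Y by (simp add: cadj_kron)
  finally show ?thesis using psd_gram[of "kron X Y" "na * nb" "m1 * m2"] X Y by simp
qed

definition vkron :: "complex vec \<Rightarrow> complex vec \<Rightarrow> complex vec" where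
  "vkron v w = vec (dim_vec v * dim_vec w) (\<lambda>i. v $ (i div dim_vec w) * w $ (i mod dim_vec w))"

lemma vkron_dim [simp]: "dim_vec (vkron v w) = dim_vec v * dim_vec w"
  by (simp add: vkron_def)

lemma vkron_carrier [simp]: "v \<in> carrier_vec a \<Longrightarrow> w \<in> carrier_vec b \<Longrightarrow> vkron v w \<in> carrier_vec (a * b)"
  unfolding carrier_vec_def by simp

lemma vkron_index:
  "v \<in> carrier_vec a \<Longrightarrow> w \<in> carrier_vec b \<Longrightarrow> i < a * b \<Longrightarrow> vkron v w $ i = v $ (i div b) * w $ (i mod b)"
  unfolding vkron_def carrier_vec_def by simp

lemma kron_mult_vkron:
  assumes A: "A \<in> carrier_mat na ma" and B: "B \<in> carrier_mat nb mb"
    and v: "v \<in> carrier_vec ma" and w: "w \<in> carrier_vec mb"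
  shows "kron A B *\<^sub>v vkron v w = vkron (A *\<^sub>v v) (B *\<^sub>v w)"
proof (rule eq_vecI_carrier[of _ "na * nb"])
  show "kron A B *\<^sub>v vkron v w \<in> carrier_vec (na * nb)" using kron_carrier[OF A B] vkron_carrier[OF v w]
    by (rule mult_mat_vec_carrier)
  show "vkron (A *\<^sub>v v) (B *\<^sub>v w) \<in> carrier_vec (na * nb)" using A B v w by simp
  fix i assume i: "i < na * nb"
  have i1: "i div nb < na" "i mod nb < nb" using i less_mult_imp_div_less mod_less_of_less_mult by auto
  have "(kron A B *\<^sub>v vkron v w) $ i = (\<Sum>t<ma * mb. kron A B $$ (i, t) * vkron v w $ t)"
    using A B v w i by (intro index_mult_mat_vec_sum) auto
  also have "\<dots> = (\<Sum>p<ma. \<Sum>q<mb. kron A B $$ (i, p * mb + q) * vkron v w $ (p * mb + q))"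
    by (rule sum_lessThan_mult)
  also have "\<dots> = (\<Sum>p<ma. \<Sum>q<mb. (A $$ (i div nb, p) * v $ p) * (B $$ (i mod nb, q) * w $ q))"
  proof (intro sum.cong refl)
    fix p q assume p: "p \<in> {..<ma}" and q: "q \<in> {..<mb}"
    have t: "p * mb + q < ma * mb" using index_pair_less p q by auto
    have "kron A B $$ (i, p * mb + q) = A $$ (i div nb, p) * B $$ (i mod nb, q)"
      using kron_index[OF A B i t] index_pair_div_mod q by simp
    moreover have "vkron v w $ (p * mb + q) = v $ p * w $ q" using vkron_index[OF v w t] index_pair_div_mod q by simp
    ultimately show "kron A B $$ (i, p * mb + q) * vkron v w $ (p * mb + q) = (A $$ (i div nb, p) * v $ p) * (B $$ (i mod nb, q) * w $ q)"
      by (simp add: mult_ac)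
  qed
  also have "\<dots> = (\<Sum>p<ma. A $$ (i div nb, p) * v $ p) * (\<Sum>q<mb. B $$ (i mod nb, q) * w $ q)"
    by (simp add: sum_product)
  also have "\<dots> = (A *\<^sub>v v) $ (i div nb) * (B *\<^sub>v w) $ (i mod nb)"
    by (simp only: index_mult_mat_vec_sum[OF A v i1(1)] index_mult_mat_vec_sum[OF B w i1(2)])
  also have "\<dots> = vkron (A *\<^sub>v v) (B *\<^sub>v w) $ i" using A B v w i by (subst vkron_index[of _ na _ nb]) auto
  finally show "(kron A B *\<^sub>v vkron v w) $ i = vkron (A *\<^sub>v v) (B *\<^sub>v w) $ i" .
qed

lemma cinner_vkron:
  assumes "v \<in> carrier_vec a" "v' \<in> carrier_vec a" "w \<in> carrier_vec b" "w' \<in> carrier_vec b"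
  shows "cinner (vkron v w) (vkron v' w') = cinner v v' * cinner w w'"
proof -
  have "cinner (vkron v w) (vkron v' w') = (\<Sum>t<a * b. cnj (vkron v w $ t) * vkron v' w' $ t)"
    using assms by (simp add: cinner_def)
  also have "\<dots> = (\<Sum>p<a. \<Sum>q<b. cnj (vkron v w $ (p * b + q)) * vkron v' w' $ (p * b + q))"
    by (rule sum_lessThan_mult)
  also have "\<dots> = (\<Sum>p<a. \<Sum>q<b. (cnj (v $ p) * v' $ p) * (cnj (w $ q) * w' $ q))"
  proof (intro sum.cong refl)
    fix p q assume p: "p \<in> {..<a}" and q: "q \<in> {..<b}"
    have t: "p * b + q < a * b" using index_pair_less p q by auto
    have "vkron v w $ (p * b + q) = v $ p * w $ q" using vkron_index[OF assms(1,3) t] index_pair_div_mod q by simp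
    moreover have "vkron v' w' $ (p * b + q) = v' $ p * w' $ q" using vkron_index[OF assms(2,4) t] index_pair_div_mod q by simp
    ultimately show "cnj (vkron v w $ (p * b + q)) * vkron v' w' $ (p * b + q) = (cnj (v $ p) * v' $ p) * (cnj (w $ q) * w' $ q)"
      by (simp add: mult_ac)
  qed
  also have "\<dots> = cinner v v' * cinner w w'" using assms by (simp add: cinner_def sum_product)
  finally show ?thesis .
qed

definition slice :: "nat \<Rightarrow> nat \<Rightarrow> complex vec \<Rightarrow> complex vec" where
  "slice D a w = vec D (\<lambda>q. w $ (a * D + q))"

lemma slice_carrier [simp]: "slice D a w \<in> carrier_vec D"
  by (simp add: slice_def)

lemma kron_one_index:
  assumes "X \<in> carrier_mat D D" "a < d" "p < d" "q < D" "q' < D"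
  shows "kron (1\<^sub>m d) X $$ (a * D + q, p * D + q') = (if a = p then X $$ (q, q') else 0)"
  using assms kron_index[of "1\<^sub>m d" d d X D D "a * D + q" "p * D + q'"]
  by (simp add: index_pair_less index_pair_div_mod)

lemma slice_kron_one:
  assumes X: "X \<in> carrier_mat D D" and w: "w \<in> carrier_vec (d * D)" and a: "a < d"
  shows "slice D a (kron (1\<^sub>m d) X *\<^sub>v w) = X *\<^sub>v slice D a w"
proof (rule eq_vecI_carrier[of _ D])
  show "X *\<^sub>v slice D a w \<in> carrier_vec D" using X by simp
  fix q assume q: "q < D"
  have aq: "a * D + q < d * D" using index_pair_less[OF a q] .
  have K: "kron (1\<^sub>m d) X \<in> carrier_mat (d * D) (d * D)" using X by auto
  have "slice D a (kron (1\<^sub>m d) X *\<^sub>v w) $ q = (kron (1\<^sub>m d) X *\<^sub>v w) $ (a * D + q)"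
    using q by (simp add: slice_def)
  also have "\<dots> = (\<Sum>t<d * D. kron (1\<^sub>m d) X $$ (a * D + q, t) * w $ t)"
    using K w aq by (intro index_mult_mat_vec_sum) auto
  also have "\<dots> = (\<Sum>p<d. \<Sum>q'<D. kron (1\<^sub>m d) X $$ (a * D + q, p * D + q') * w $ (p * D + q'))"
    by (rule sum_lessThan_mult)
  also have "\<dots> = (\<Sum>p<d. if p = a then (\<Sum>q'<D. X $$ (q, q') * w $ (a * D + q')) else 0)"
    using X a q by (intro sum.cong refl) (auto simp: kron_one_index)
  also have "\<dots> = (\<Sum>q'<D. X $$ (q, q') * w $ (a * D + q'))" using a by simp
  also have "\<dots> = (X *\<^sub>v slice D a w) $ q" using X q by (subst index_mult_mat_vec_sum[of _ D D]) (auto simp: slice_def)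
  finally show "slice D a (kron (1\<^sub>m d) X *\<^sub>v w) $ q = (X *\<^sub>v slice D a w) $ q" .
qed simp

lemma eq_vec_slicesI:
  assumes v: "v \<in> carrier_vec (d * D)" and w: "w \<in> carrier_vec (d * D)"
    and eq: "\<And>a. a < d \<Longrightarrow> slice D a v = slice D a w"
  shows "v = w"
proof (rule eq_vecI_carrier[OF v w])
  fix i assume i: "i < d * D"
  have a: "i div D < d" and q: "i mod D < D" using i less_mult_imp_div_less mod_less_of_less_mult by auto
  have "v $ i = slice D (i div D) v $ (i mod D)" using q by (simp add: slice_def mult.commute)
  also have "\<dots> = slice D (i div D) w $ (i mod D)" using eq[OF a] by simp
  also have "\<dots> = w $ i" using q by (simp add: slice_def mult.commute)
  finally show "v $ i = w $ i" .
qed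

lemma kron_form:
  assumes A: "A \<in> carrier_mat n n" "cadj A = A" and v: "v \<in> carrier_vec n"
    and B: "B \<in> carrier_mat m m" "cadj B = B" and w: "w \<in> carrier_vec m"
  shows "Re (cinner (vkron v w) (kron A B *\<^sub>v vkron v w)) = Re (cinner v (A *\<^sub>v v)) * Re (cinner w (B *\<^sub>v w))"
proof -
  have "cinner (vkron v w) (kron A B *\<^sub>v vkron v w) = cinner (vkron v w) (vkron (A *\<^sub>v v) (B *\<^sub>v w))"
    using kron_mult_vkron[OF A(1) B(1) v w] by simp
  also have "\<dots> = cinner v (A *\<^sub>v v) * cinner w (B *\<^sub>v w)" using A B v w by (intro cinner_vkron) auto
  finally show ?thesis using herm_form_real[OF A v] herm_form_real[OF B w]
    by (metis Re_complex_of_real of_real_mult)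
qed

lemma kron_minus_left:
  assumes A: "A \<in> carrier_mat a a" and B: "B \<in> carrier_mat a a" and C: "C \<in> carrier_mat b b"
  shows "kron (A - B) C = kron A C - kron B C"
proof -
  have "i div b < a" "i mod b < b" if "i < a * b" for i
    using that less_mult_imp_div_less mod_less_of_less_mult by auto
  thus ?thesis using A B C by (intro eq_matI) (auto simp: kron_def algebra_simps)
qed

lemma kron_split_one:
  assumes "X \<in> carrier_mat a a" "Y \<in> carrier_mat b b"
  shows "kron X Y = kron X (1\<^sub>m b) * kron (1\<^sub>m a) Y" "kron X Y = kron (1\<^sub>m a) Y * kron X (1\<^sub>m b)"
  using kron_mult[of X a a "1\<^sub>m b" b b "1\<^sub>m a" a Y b] kron_mult[of "1\<^sub>m a" a a Y b b X a "1\<^sub>m b" b] assms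
  by simp_all

lemma slice_zero: "a < d \<Longrightarrow> slice D a (0\<^sub>v (d * D)) = 0\<^sub>v D"
  by (intro eq_vecI) (auto simp: slice_def index_pair_less)

lemma tensor_list_0 [simp]: "tensor_list 0 f = 1\<^sub>m 1"
  by (simp add: tensor_list_def)

lemma tensor_list_Suc: "tensor_list (Suc L) f = kron (f 0) (tensor_list L (\<lambda>l. f (Suc l)))"
  by (simp add: tensor_list_def upt_conv_Cons foldr_map o_def del: upt_Suc flip: map_Suc_upt)

lemma psd_tensor_list: "\<forall>l<L. psd (d l) (f l) \<Longrightarrow> psd (\<Prod>l<L. d l) (tensor_list L f)"
proof (induction L arbitrary: d f)
  case (Suc L)
  have "psd (d 0 * (\<Prod>l<L. d (Suc l))) (kron (f 0) (tensor_list L (\<lambda>l. f (Suc l))))"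
    using Suc by (intro psd_kron) auto
  thus ?case by (simp only: tensor_list_Suc prod.lessThan_Suc_shift)
qed (simp add: psd_one)

section \<open>Orthogonal projections\<close>

lemma mat_rangeI: "A \<in> carrier_mat n m \<Longrightarrow> v \<in> carrier_vec m \<Longrightarrow> A *\<^sub>v v \<in> mat_range A"
  unfolding mat_range_def by auto

lemma mat_rangeE:
  assumes "x \<in> mat_range A" "A \<in> carrier_mat n m"
  obtains v where "v \<in> carrier_vec m" "x = A *\<^sub>v v"
  using assms unfolding mat_range_def by auto

lemma idem_mat_range:
  assumes "P \<in> carrier_mat n n" "P * P = P"
  shows "mat_range P = {x \<in> carrier_vec n. P *\<^sub>v x = x}"
proof safe
  fix x assume "x \<in> mat_range P"
  then obtain c where c: "c \<in> carrier_vec n" "x = P *\<^sub>v c" using assms(1) by (rule mat_rangeE)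
  thus "x \<in> carrier_vec n" using assms(1) by simp
  show "P *\<^sub>v x = x" using c assms by (simp flip: assoc_mult_mat_vec)
next
  fix x :: "complex vec" assume "x \<in> carrier_vec n" "P *\<^sub>v x = x"
  thus "x \<in> mat_range P" using mat_rangeI[OF assms(1)] by metis
qed

lemma is_orth_projD:
  assumes "is_orth_proj n P S"
  shows "P \<in> carrier_mat n n" "P * P = P" "cadj P = P" "S = {x \<in> carrier_vec n. P *\<^sub>v x = x}"
  using assms idem_mat_range[of P n] unfolding is_orth_proj_def by auto

lemma is_orth_proj_mult_vec:
  "is_orth_proj n P S \<Longrightarrow> x \<in> carrier_vec n \<Longrightarrow> P *\<^sub>v x \<in> S"
  unfolding is_orth_proj_def using mat_rangeI by blast

lemma is_orth_proj_unique:
  assumes P1: "is_orth_proj n P1 S" and P2: "is_orth_proj n P2 S"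
  shows "P1 = P2"
proof -
  note p1 = is_orth_projD[OF P1] and p2 = is_orth_projD[OF P2]
  have fix1: "P1 * P2 = P2" and fix2: "P2 * P1 = P1"
    using p1 p2 is_orth_proj_mult_vec[OF P1] is_orth_proj_mult_vec[OF P2]
    by (auto intro!: mat_eq_mult_vecI[of _ n n])
  have "P2 = cadj (P1 * P2)" using fix1 p2 by simp
  also have "\<dots> = P2 * P1" using p1 p2 by (simp add: cadj_mult[of _ n n _ n])
  finally show ?thesis using fix2 by simp
qed

lemma is_orth_proj_orth_proj: "is_orth_proj n P S \<Longrightarrow> orth_proj n S = P"
  unfolding orth_proj_def using is_orth_proj_unique by blast

lemma psd_orth_proj:
  assumes "is_orth_proj n P S"
  shows "psd n P"
proof -
  note p = is_orth_projD[OF assms]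
  have "P = P * cadj P" using p by simp
  thus ?thesis using psd_gram[OF p(1)] by simp
qed

lemma is_orth_proj_kernel_orthogonal:
  assumes P: "is_orth_proj n P S" and r: "r \<in> carrier_vec n" "P *\<^sub>v r = 0\<^sub>v n" and y: "y \<in> S"
  shows "cinner r y = 0"
proof -
  note p = is_orth_projD[OF P]
  have yc: "y \<in> carrier_vec n" "P *\<^sub>v y = y" using p(4) y by auto
  have "cinner r y = cinner (cadj P *\<^sub>v r) y" using cinner_adj[OF p(1) r(1) yc(1)] yc(2) by simp
  thus ?thesis using p(3) r(2) yc(1) by simp
qed

lemma is_orth_proj_add_outer:
  assumes P': "is_orth_proj n P' S" and r: "r \<in> carrier_vec n" "P' *\<^sub>v r = 0\<^sub>v n" "r \<noteq> 0\<^sub>v n"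
  defines "P \<equiv> P' + complex_of_real (1 / Re (cinner r r)) \<cdot>\<^sub>m outer r"
  shows "is_orth_proj n P {y + t \<cdot>\<^sub>v r | y t. y \<in> S}"
proof -
  define T where "T = {y + t \<cdot>\<^sub>v r | y t. y \<in> S}"
  define nr where "nr = Re (cinner r r)"
  note p' = is_orth_projD[OF P']
  have rr: "cinner r r = complex_of_real nr" unfolding nr_def using cinner_self[of r] by simp
  have nr0: "nr \<noteq> 0" using rr cinner_self_eq_0[of r] r by auto
  have Pc: "P \<in> carrier_mat n n" unfolding P_def using p' r by simp
  have Pmv: "P *\<^sub>v x = P' *\<^sub>v x + (cinner r x / complex_of_real nr) \<cdot>\<^sub>v r" if "x \<in> carrier_vec n" for x
    unfolding P_def nr_def[symmetric] using p' r that
    by (simp add: add_mult_distrib_mat_vec[of _ n n] smult_mat_mult_vec outer_mult_vec smult_smult_assoc)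
  have fixT: "P *\<^sub>v x = x" if "x \<in> T" for x
  proof -
    obtain y t where y: "y \<in> S" "x = y + t \<cdot>\<^sub>v r" using \<open>x \<in> T\<close> unfolding T_def by blast
    have yc: "y \<in> carrier_vec n" "P' *\<^sub>v y = y" using p'(4) y(1) by auto
    have "cinner r x = t * complex_of_real nr"
      using y is_orth_proj_kernel_orthogonal[OF P' r(1,2) y(1)] rr r yc by (simp add: cinner_add_right cinner_smult_right)
    thus ?thesis using Pmv[of x] y yc r p'(1) nr0
      by (auto simp: mult_add_distrib_mat_vec mult_mat_vec)
  qed
  have rangeT: "P *\<^sub>v x \<in> T" if "x \<in> carrier_vec n" for x
    using Pmv[OF that] is_orth_proj_mult_vec[OF P' that] unfolding T_def by blast
  have "P * P = P"
    using Pc fixT rangeT by (intro mat_eq_mult_vecI[of _ n n]) auto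
  moreover have "mat_range P = T"
  proof
    show "mat_range P \<subseteq> T" using rangeT Pc by (auto elim: mat_rangeE)
    show "T \<subseteq> mat_range P"
    proof
      fix x assume "x \<in> T"
      moreover have "x \<in> carrier_vec n"
        using \<open>x \<in> T\<close> p'(4) r unfolding T_def by auto
      ultimately show "x \<in> mat_range P" using fixT mat_rangeI[OF Pc] by metis
    qed
  qed
  moreover have "cadj P = P" unfolding P_def using p' r by (simp add: cadj_add[of _ n n] cadj_smult cadj_outer)
  ultimately show ?thesis using Pc unfolding is_orth_proj_def T_def by blast
qed

lemma is_orth_proj_extend:
  assumes P': "is_orth_proj n P' S" and v: "v \<in> carrier_vec n"
  shows "\<exists>P. is_orth_proj n P {y + t \<cdot>\<^sub>v v | y t. y \<in> S}"
proof -
  note p' = is_orth_projD[OF P']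
  define r where "r = v - P' *\<^sub>v v"
  have r: "r \<in> carrier_vec n" unfolding r_def using v p' by simp
  have P'v: "P' *\<^sub>v v \<in> S" by (rule is_orth_proj_mult_vec[OF P' v])
  have P'r: "P' *\<^sub>v r = 0\<^sub>v n"
    unfolding r_def using p' v by (simp add: mult_minus_distrib_mat_vec flip: assoc_mult_mat_vec)
  have S_lin: "y + t \<cdot>\<^sub>v (P' *\<^sub>v v) \<in> S" if "y \<in> S" for y t
    using that p' v by (auto simp: mult_add_distrib_mat_vec mult_mat_vec simp flip: assoc_mult_mat_vec)
  \<comment> \<open>replacing \<open>v\<close> by its component \<open>r\<close> orthogonal to \<open>S\<close> does not change the span\<close>
  have span_eq: "{y + t \<cdot>\<^sub>v v | y t. y \<in> S} = {y + t \<cdot>\<^sub>v r | y t. y \<in> S}"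
  proof -
    have "y + t \<cdot>\<^sub>v v = (y + t \<cdot>\<^sub>v (P' *\<^sub>v v)) + t \<cdot>\<^sub>v r" if "y \<in> S" for y t
      using that p'(4) v p'(1) unfolding r_def by (intro eq_vecI) (auto simp: algebra_simps)
    moreover have "y + t \<cdot>\<^sub>v r = (y + (- t) \<cdot>\<^sub>v (P' *\<^sub>v v)) + t \<cdot>\<^sub>v v" if "y \<in> S" for y t
      using that p'(4) v p'(1) unfolding r_def by (intro eq_vecI) (auto simp: algebra_simps)
    ultimately show ?thesis using S_lin by blast
  qed
  show ?thesis
  proof (cases "r = 0\<^sub>v n")
    case True
    have same: "y + t \<cdot>\<^sub>v r = y" if "y \<in> S" for y t
      using True that p'(4) by auto
    have "{y + t \<cdot>\<^sub>v r | y t. y \<in> S} = S"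
    proof (intro equalityI subsetI)
      fix x assume "x \<in> {y + t \<cdot>\<^sub>v r | y t. y \<in> S}"
      thus "x \<in> S" using same by auto
    next
      fix x assume "x \<in> S"
      hence "x = x + 0 \<cdot>\<^sub>v r" using same by simp
      thus "x \<in> {y + t \<cdot>\<^sub>v r | y t. y \<in> S}" using \<open>x \<in> S\<close> by blast
    qed
    thus ?thesis using P' span_eq by auto
  next
    case False
    thus ?thesis using is_orth_proj_add_outer[OF P' r P'r] span_eq by auto
  qed
qed

definition take_cols :: "complex mat \<Rightarrow> nat \<Rightarrow> complex mat" where
  "take_cols A k = mat (dim_row A) k (\<lambda>(i, j). A $$ (i, j))"

lemma take_cols_carrier: "A \<in> carrier_mat n m \<Longrightarrow> take_cols A k \<in> carrier_mat n k"
  by (simp add: take_cols_def)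

lemma take_cols_all: "A \<in> carrier_mat n m \<Longrightarrow> take_cols A m = A"
  by (rule eq_matI) (auto simp: take_cols_def)

lemma mat_range_zero_mat: "mat_range (0\<^sub>m n k :: complex mat) = {0\<^sub>v n}"
proof -
  have z: "(0\<^sub>m n k :: complex mat) *\<^sub>v c = 0\<^sub>v n" if "c \<in> carrier_vec k" for c
    using that by (intro eq_vecI) (auto simp: scalar_prod_def)
  show ?thesis
  proof (intro equalityI subsetI)
    fix x assume "x \<in> mat_range (0\<^sub>m n k :: complex mat)"
    then obtain c where "c \<in> carrier_vec k" "x = 0\<^sub>m n k *\<^sub>v c" using zero_carrier_mat by (rule mat_rangeE)
    thus "x \<in> {0\<^sub>v n}" using z by simp
  next
    fix x :: "complex vec" assume "x \<in> {0\<^sub>v n}"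
    thus "x \<in> mat_range (0\<^sub>m n k :: complex mat)"
      using mat_rangeI[of "0\<^sub>m n k" n k "0\<^sub>v k"] z[of "0\<^sub>v k"] by simp
  qed
qed

lemma take_cols_0: "take_cols A 0 = 0\<^sub>m (dim_row A) 0"
  by (rule eq_matI) (auto simp: take_cols_def)

lemma take_cols_Suc_mult_vec:
  assumes A: "A \<in> carrier_mat n m" and k: "k < m" and c: "c \<in> carrier_vec (Suc k)"
  shows "take_cols A (Suc k) *\<^sub>v c = take_cols A k *\<^sub>v vec k (\<lambda>j. c $ j) + (c $ k) \<cdot>\<^sub>v col A k"
proof -
  have tk: "take_cols A k \<in> carrier_mat n k" "take_cols A (Suc k) \<in> carrier_mat n (Suc k)"
    using take_cols_carrier[OF A] by auto
  have vk: "vec k (\<lambda>j. c $ j) \<in> carrier_vec k" by simp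
  show ?thesis
  proof (rule eq_vecI_carrier[of _ n])
    show "take_cols A (Suc k) *\<^sub>v c \<in> carrier_vec n" using tk(2) c by (rule mult_mat_vec_carrier)
    show "take_cols A k *\<^sub>v vec k (\<lambda>j. c $ j) + (c $ k) \<cdot>\<^sub>v col A k \<in> carrier_vec n"
      using mult_mat_vec_carrier[OF tk(1) vk] A k by simp
    fix i assume i: "i < n"
    have "(take_cols A (Suc k) *\<^sub>v c) $ i = (\<Sum>j<Suc k. take_cols A (Suc k) $$ (i, j) * c $ j)"
      using tk c i by (intro index_mult_mat_vec_sum) auto
    also have "\<dots> = (\<Sum>j<k. A $$ (i, j) * c $ j) + A $$ (i, k) * c $ k"
      using A i k by (simp add: take_cols_def)
    also have "(\<Sum>j<k. A $$ (i, j) * c $ j) = (take_cols A k *\<^sub>v vec k (\<lambda>j. c $ j)) $ i"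
      using index_mult_mat_vec_sum[OF tk(1) vk i] A i by (simp add: take_cols_def)
    finally show "(take_cols A (Suc k) *\<^sub>v c) $ i = (take_cols A k *\<^sub>v vec k (\<lambda>j. c $ j) + (c $ k) \<cdot>\<^sub>v col A k) $ i"
      using A i k by simp
  qed
qed

lemma mat_range_take_cols_Suc:
  assumes A: "A \<in> carrier_mat n m" and k: "k < m"
  shows "mat_range (take_cols A (Suc k)) = {y + t \<cdot>\<^sub>v col A k | y t. y \<in> mat_range (take_cols A k)}"
proof -
  note split = take_cols_Suc_mult_vec[OF A k]
  show ?thesis
  proof safe
    fix x assume "x \<in> mat_range (take_cols A (Suc k))"
    then obtain c where "c \<in> carrier_vec (Suc k)" "x = take_cols A (Suc k) *\<^sub>v c"
      using take_cols_carrier[OF A, of "Suc k"] by (rule mat_rangeE)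
    moreover have "take_cols A k *\<^sub>v vec k (\<lambda>j. c $ j) \<in> mat_range (take_cols A k)"
      using take_cols_carrier[OF A] by (intro mat_rangeI) auto
    ultimately show "\<exists>y t. x = y + t \<cdot>\<^sub>v col A k \<and> y \<in> mat_range (take_cols A k)"
      using split by blast
  next
    fix y t assume "y \<in> mat_range (take_cols A k)"
    then obtain c' where c': "c' \<in> carrier_vec k" "y = take_cols A k *\<^sub>v c'"
      using take_cols_carrier[OF A, of k] by (rule mat_rangeE)
    define c where "c = vec (Suc k) (\<lambda>j. if j < k then c' $ j else t)"
    have c: "c \<in> carrier_vec (Suc k)" unfolding c_def by simp
    have "vec k (\<lambda>j. c $ j) = c'" using c' unfolding c_def by (intro eq_vecI) auto
    hence "y + t \<cdot>\<^sub>v col A k = take_cols A (Suc k) *\<^sub>v c" using split[OF c] c' unfolding c_def by simp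
    thus "y + t \<cdot>\<^sub>v col A k \<in> mat_range (take_cols A (Suc k))"
      using mat_rangeI[OF take_cols_carrier[OF A] c] by simp
  qed
qed

lemma is_orth_proj_mat_range_exists:
  assumes A: "A \<in> carrier_mat n m"
  shows "\<exists>P. is_orth_proj n P (mat_range A)"
proof -
  have "\<exists>P. is_orth_proj n P (mat_range (take_cols A k))" if "k \<le> m" for k
    using that
  proof (induction k)
    case 0
    have "is_orth_proj n (0\<^sub>m n n) (mat_range (take_cols A 0))"
      using A unfolding is_orth_proj_def take_cols_0 mat_range_zero_mat by auto
    thus ?case by blast
  next
    case (Suc k)
    then obtain P' where P': "is_orth_proj n P' (mat_range (take_cols A k))" by auto
    have "col A k \<in> carrier_vec n" using A Suc.prems by (intro col_carrier_vec) auto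
    thus ?case using is_orth_proj_extend[OF P'] A Suc.prems by (simp add: mat_range_take_cols_Suc)
  qed
  thus ?thesis using take_cols_all[OF A] by force
qed

lemma supp_proj_is_orth_proj:
  assumes "A \<in> carrier_mat n n"
  shows "is_orth_proj n (supp_proj A) (mat_range A)"
proof -
  obtain P where "is_orth_proj n P (mat_range A)" using is_orth_proj_mat_range_exists[OF assms] ..
  moreover have "supp_proj A = orth_proj n (mat_range A)" using assms by (simp add: supp_proj_def)
  ultimately show ?thesis using is_orth_proj_orth_proj by simp
qed

lemma is_orth_proj_complement:
  assumes "is_orth_proj n P S"
  shows "is_orth_proj n (1\<^sub>m n - P) (mat_kernel P)"
proof -
  note p = is_orth_projD[OF assms]
  have Qc: "1\<^sub>m n - P \<in> carrier_mat n n" using p(1) by (rule minus_carrier_mat)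
  have Qmv: "(1\<^sub>m n - P) *\<^sub>v x = x - P *\<^sub>v x" if "x \<in> carrier_vec n" for x
    using one_minus_mult_vec[OF p(1) that] .
  have PQ: "P *\<^sub>v ((1\<^sub>m n - P) *\<^sub>v x) = 0\<^sub>v n" if "x \<in> carrier_vec n" for x
    using that p by (simp add: Qmv mult_minus_distrib_mat_vec flip: assoc_mult_mat_vec)
  have ker: "x \<in> mat_kernel P \<longleftrightarrow> x \<in> carrier_vec n \<and> (1\<^sub>m n - P) *\<^sub>v x = x" for x
  proof
    assume "x \<in> mat_kernel P"
    thus "x \<in> carrier_vec n \<and> (1\<^sub>m n - P) *\<^sub>v x = x" using p(1) Qmv by (auto simp: mat_kernel_def)
  next
    assume x: "x \<in> carrier_vec n \<and> (1\<^sub>m n - P) *\<^sub>v x = x"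
    hence "P *\<^sub>v x = 0\<^sub>v n" using PQ[of x] by simp
    thus "x \<in> mat_kernel P" using x p(1) by (auto simp: mat_kernel_def)
  qed
  have "(1\<^sub>m n - P) * (1\<^sub>m n - P) = 1\<^sub>m n - P"
  proof (rule mat_eq_mult_vecI[of _ n n])
    fix x :: "complex vec" assume x: "x \<in> carrier_vec n"
    have "((1\<^sub>m n - P) * (1\<^sub>m n - P)) *\<^sub>v x = (1\<^sub>m n - P) *\<^sub>v ((1\<^sub>m n - P) *\<^sub>v x)"
      using Qc x by simp
    also have "\<dots> = (1\<^sub>m n - P) *\<^sub>v x - P *\<^sub>v ((1\<^sub>m n - P) *\<^sub>v x)"
      using Qc x by (intro Qmv) auto
    finally have "((1\<^sub>m n - P) * (1\<^sub>m n - P)) *\<^sub>v x = (1\<^sub>m n - P) *\<^sub>v x - P *\<^sub>v ((1\<^sub>m n - P) *\<^sub>v x)" .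
    thus "((1\<^sub>m n - P) * (1\<^sub>m n - P)) *\<^sub>v x = (1\<^sub>m n - P) *\<^sub>v x" using PQ[OF x] Qc x by simp
  qed (use Qc in auto)
  moreover have "mat_range (1\<^sub>m n - P) = mat_kernel P"
    using idem_mat_range[OF Qc calculation] ker by blast
  moreover have "cadj (1\<^sub>m n - P) = 1\<^sub>m n - P" using p by (simp add: cadj_minus[of _ n n])
  ultimately show ?thesis using Qc unfolding is_orth_proj_def by blast
qed

lemma supp_proj_kernel:
  assumes A: "A \<in> carrier_mat n n" and h: "cadj A = A"
  shows "mat_kernel (supp_proj A) = mat_kernel A"
proof -
  define P where "P = supp_proj A"
  have PS: "is_orth_proj n P (mat_range A)" unfolding P_def using supp_proj_is_orth_proj[OF A] .
  note p = is_orth_projD[OF PS]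
  have "P *\<^sub>v x = 0\<^sub>v n \<longleftrightarrow> A *\<^sub>v x = 0\<^sub>v n" if x: "x \<in> carrier_vec n" for x
  proof
    assume Px: "P *\<^sub>v x = 0\<^sub>v n"
    have AAx: "A *\<^sub>v (A *\<^sub>v x) \<in> mat_range A" using A x by (intro mat_rangeI) auto
    have "cinner (A *\<^sub>v x) (A *\<^sub>v x) = cinner x (A *\<^sub>v (A *\<^sub>v x))"
      using cinner_adj[OF A x, of "A *\<^sub>v x"] A x h by simp
    also have "\<dots> = cinner x (P *\<^sub>v (A *\<^sub>v (A *\<^sub>v x)))" using AAx p(4) by auto
    also have "\<dots> = cinner (P *\<^sub>v x) (A *\<^sub>v (A *\<^sub>v x))" using cinner_adj[OF p(1) x] p(3) A x by simp
    finally have "A *\<^sub>v x = 0\<^sub>v (dim_vec (A *\<^sub>v x))" using Px by (intro cinner_self_eq_0) simp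
    thus "A *\<^sub>v x = 0\<^sub>v n" using A by simp
  next
    assume Ax: "A *\<^sub>v x = 0\<^sub>v n"
    obtain c where c: "c \<in> carrier_vec n" "P *\<^sub>v x = A *\<^sub>v c"
      using is_orth_proj_mult_vec[OF PS x] A by (rule mat_rangeE)
    have "cinner (P *\<^sub>v x) (P *\<^sub>v x) = cinner x (P *\<^sub>v (P *\<^sub>v x))"
      using cinner_adj[OF p(1) x, of "P *\<^sub>v x"] p x by simp
    also have "\<dots> = cinner x (P *\<^sub>v x)" using p x by (simp flip: assoc_mult_mat_vec)
    also have "\<dots> = cinner x (A *\<^sub>v c)" using c by simp
    also have "\<dots> = cinner (A *\<^sub>v x) c" using cinner_adj[OF A x c(1)] h by simp
    finally have "P *\<^sub>v x = 0\<^sub>v (dim_vec (P *\<^sub>v x))" using Ax by (intro cinner_self_eq_0) simp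
    thus "P *\<^sub>v x = 0\<^sub>v n" using p by simp
  qed
  thus ?thesis unfolding P_def[symmetric] using A p(1) by (auto simp: mat_kernel_def)
qed

lemma ker_proj_eq:
  assumes "A \<in> carrier_mat n n" "cadj A = A"
  shows "ker_proj A = 1\<^sub>m n - supp_proj A"
proof -
  have "is_orth_proj n (1\<^sub>m n - supp_proj A) (mat_kernel A)"
    using is_orth_proj_complement[OF supp_proj_is_orth_proj] supp_proj_kernel assms by metis
  thus ?thesis using assms(1) unfolding ker_proj_def by (simp add: is_orth_proj_orth_proj)
qed

lemma psd_ker_proj: "A \<in> carrier_mat n n \<Longrightarrow> cadj A = A \<Longrightarrow> psd n (ker_proj A)"
  using is_orth_proj_complement[OF supp_proj_is_orth_proj] ker_proj_eq psd_orth_proj by metis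

lemma mat_range_factor:
  assumes A: "A \<in> carrier_mat n m" and P: "P \<in> carrier_mat n k"
    and R: "\<And>x. x \<in> carrier_vec k \<Longrightarrow> P *\<^sub>v x \<in> mat_range A"
  shows "\<exists>Y. Y \<in> carrier_mat m k \<and> P = A * Y"
proof -
  have "\<forall>j. \<exists>c. j < k \<longrightarrow> c \<in> carrier_vec m \<and> col P j = A *\<^sub>v c"
    using R[of "unit_vec k _"] mult_unit_vec[OF P] A by (metis mat_rangeE unit_vec_carrier)
  then obtain f where f: "\<And>j. j < k \<Longrightarrow> f j \<in> carrier_vec m \<and> col P j = A *\<^sub>v f j"
    by metis
  define Y where "Y = mat m k (\<lambda>(i, j). f j $ i)"
  have Y: "Y \<in> carrier_mat m k" unfolding Y_def by simp
  have "col Y j = f j" if "j < k" for j using f[OF that] that unfolding Y_def by (intro eq_vecI) auto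
  hence "P = A * Y" using A Y P f by (intro mat_col_eqI) auto
  thus ?thesis using Y by blast
qed

lemma ker_proj_factor:
  assumes A: "A \<in> carrier_mat n n" and h: "cadj A = A"
  shows "\<exists>Y. Y \<in> carrier_mat n n \<and> ker_proj A = 1\<^sub>m n - Y * A"
proof -
  have PS: "is_orth_proj n (supp_proj A) (mat_range A)" using supp_proj_is_orth_proj[OF A] .
  note p = is_orth_projD[OF PS]
  obtain Y where Y: "Y \<in> carrier_mat n n" "supp_proj A = A * Y"
    using mat_range_factor[OF A p(1) is_orth_proj_mult_vec[OF PS]] by blast
  have "supp_proj A = cadj (A * Y)" using p(3) Y(2) by simp
  also have "\<dots> = cadj Y * A" using cadj_mult[OF A Y(1)] h by simp
  finally show ?thesis using ker_proj_eq[OF A h] Y(1) by (intro exI[of _ "cadj Y"]) auto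
qed

section \<open>Maximum confidence\<close>

text \<open>For \<open>R0 = \<rho>\<^sub>0\<close>, \<open>R = \<rho>\<^sub>x\<close>, \<open>h = \<eta>\<^sub>x\<close> and \<open>q = \<C>\<^sub>x\<close> this is the operator whose kernel projection
  is \<open>\<Pi>\<^sup>\<bottom>\<^sub>x\<close>.\<close>

abbreviation conf_op :: "complex mat \<Rightarrow> complex mat \<Rightarrow> real \<Rightarrow> real \<Rightarrow> complex mat" where
  "conf_op R0 R h q \<equiv> complex_of_real q \<cdot>\<^sub>m R0 - complex_of_real h \<cdot>\<^sub>m R"

lemma conf_op_carrier:
  "R0 \<in> carrier_mat n n \<Longrightarrow> R \<in> carrier_mat n n \<Longrightarrow> conf_op R0 R h q \<in> carrier_mat n n"
  by (intro minus_carrier_mat) auto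

lemma conf_op_form:
  assumes "R0 \<in> carrier_mat n n" "R \<in> carrier_mat n n" "v \<in> carrier_vec n"
  shows "Re (cinner v (conf_op R0 R h q *\<^sub>v v)) = q * Re (cinner v (R0 *\<^sub>v v)) - h * Re (cinner v (R *\<^sub>v v))"
  using assms by (simp add: minus_mult_distrib_mat_vec[of _ n n] smult_mat_mult_vec cinner_minus_right
      cinner_smult_right)

lemma psd_conf_op_iff:
  assumes "R0 \<in> carrier_mat n n" "cadj R0 = R0" "R \<in> carrier_mat n n" "cadj R = R"
  shows "psd n (conf_op R0 R h q) \<longleftrightarrow>
    (\<forall>v \<in> carrier_vec n. h * Re (cinner v (R *\<^sub>v v)) \<le> q * Re (cinner v (R0 *\<^sub>v v)))"
  using assms conf_op_carrier[OF assms(1,3)] conf_op_form[OF assms(1,3)]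
  by (auto simp: psd_def cadj_minus[of _ n n] cadj_smult)

text \<open>The set of admissible \<open>q\<close> is an intersection of closed half-lines, so its infimum is attained.\<close>

lemma conf_Inf_mem:
  assumes R0: "psd n R0" and R: "R \<in> carrier_mat n n" "cadj R = R"
    and ne: "psd n (conf_op R0 R h p)" and bdd: "bdd_below {q. psd n (conf_op R0 R h q)}"
  shows "psd n (conf_op R0 R h (Inf {q. psd n (conf_op R0 R h q)}))"
proof -
  define S where "S = {q. psd n (conf_op R0 R h q)}"
  note iff = psd_conf_op_iff[OF psd_carrier[OF R0] psd_herm[OF R0] R]
  have "h * Re (cinner v (R *\<^sub>v v)) \<le> Inf S * Re (cinner v (R0 *\<^sub>v v))" if v: "v \<in> carrier_vec n" for v
  proof -
    define a where "a = Re (cinner v (R0 *\<^sub>v v))"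
    define b where "b = Re (cinner v (R *\<^sub>v v))"
    have Sq: "h * b \<le> q * a" if "q \<in> S" for q using that v iff unfolding S_def a_def b_def by auto
    show ?thesis
    proof (cases "a = 0")
      case True
      thus ?thesis using Sq[of p] ne unfolding S_def a_def[symmetric] b_def[symmetric] by simp
    next
      case False
      hence a0: "0 < a" using psd_form[OF R0 v] unfolding a_def by simp
      have "h * b / a \<le> Inf S"
        using Sq a0 ne unfolding S_def by (intro cInf_greatest) (auto simp: divide_le_eq mult.commute)
      thus ?thesis using a0 unfolding a_def[symmetric] b_def[symmetric] by (simp add: divide_le_eq mult.commute)
    qed
  qed
  thus ?thesis using iff unfolding S_def by simp
qed

text \<open>Unlike \<^const>\<open>max_conf\<close>, which is an infimum, this records that the minimum is attained.\<close>

definition is_min_conf :: "nat \<Rightarrow> complex mat \<Rightarrow> complex mat \<Rightarrow> real \<Rightarrow> real \<Rightarrow> bool" where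
  "is_min_conf n R0 R h c \<longleftrightarrow> psd n R0 \<and> psd n R \<and> 0 < h \<and> 0 < c \<and>
     psd n (conf_op R0 R h c) \<and> (\<forall>q < c. \<not> psd n (conf_op R0 R h q))"

lemma is_min_conf_max_conf: "is_min_conf n R0 R h c \<Longrightarrow> max_conf n h R R0 = c"
  unfolding is_min_conf_def max_conf_def by (auto intro!: cInf_eq_minimum simp: not_less[symmetric])

lemma psd_weighted_sum:
  assumes "finite I" "\<And>i. i \<in> I \<Longrightarrow> 0 \<le> c i" "\<And>i. i \<in> I \<Longrightarrow> psd n (r i)"
  shows "psd n (mat n n (\<lambda>(a, b). \<Sum>i\<in>I. complex_of_real (c i) * r i $$ (a, b)))"
  using assms
proof (induction I rule: finite_induct)
  case empty
  have "mat n n (\<lambda>(a, b). \<Sum>i\<in>{}. complex_of_real (c i) * r i $$ (a, b)) = 0\<^sub>m n n"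
    by (intro eq_matI) auto
  thus ?case by (simp only: psd_zero)
next
  case (insert j I)
  have "r j \<in> carrier_mat n n" using insert.prems(2) by (auto simp: psd_def)
  hence eq: "mat n n (\<lambda>(a, b). \<Sum>i\<in>insert j I. complex_of_real (c i) * r i $$ (a, b)) =
    complex_of_real (c j) \<cdot>\<^sub>m r j + mat n n (\<lambda>(a, b). \<Sum>i\<in>I. complex_of_real (c i) * r i $$ (a, b))"
    using insert.hyps by (intro eq_matI) auto
  have "psd n (complex_of_real (c j) \<cdot>\<^sub>m r j)" using insert.prems by (intro psd_smult) auto
  moreover have "psd n (mat n n (\<lambda>(a, b). \<Sum>i\<in>I. complex_of_real (c i) * r i $$ (a, b)))"
    by (rule insert.IH) (use insert.prems in auto)
  ultimately show ?case unfolding eq by (rule psd_add)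
qed

lemma ensembleD: "ensemble d n \<eta> \<rho> \<Longrightarrow> i < n \<Longrightarrow> psd d (\<rho> i) \<and> ctrace (\<rho> i) = 1 \<and> 0 < \<eta> i"
  by (auto simp: ensemble_def density_op_def)

lemma psd_avg_state: "ensemble d n \<eta> \<rho> \<Longrightarrow> psd d (avg_state d n \<eta> \<rho>)"
  unfolding avg_state_def using ensembleD less_imp_le by (intro psd_weighted_sum) blast+

lemma psd_avg_state_minus:
  assumes E: "ensemble d n \<eta> \<rho>" and x: "x < n"
  shows "psd d (avg_state d n \<eta> \<rho> - complex_of_real (\<eta> x) \<cdot>\<^sub>m \<rho> x)"
proof -
  have rx: "\<rho> x \<in> carrier_mat d d" using ensembleD[OF E x] by (simp add: psd_def)
  have "avg_state d n \<eta> \<rho> - complex_of_real (\<eta> x) \<cdot>\<^sub>m \<rho> x =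
    mat d d (\<lambda>(a, b). \<Sum>i\<in>{..<n} - {x}. complex_of_real (\<eta> i) * \<rho> i $$ (a, b))"
    using rx x by (intro eq_matI) (auto simp: avg_state_def sum.remove[of _ x])
  also have "psd d \<dots>" using ensembleD[OF E] less_imp_le by (intro psd_weighted_sum) blast+
  finally show ?thesis .
qed

lemma ctrace_avg_state:
  assumes E: "ensemble d n \<eta> \<rho>"
  shows "ctrace (avg_state d n \<eta> \<rho>) = 1"
proof -
  have "ctrace (avg_state d n \<eta> \<rho>) = (\<Sum>i<n. complex_of_real (\<eta> i) * (\<Sum>a<d. \<rho> i $$ (a, a)))"
    by (simp add: ctrace_def avg_state_def sum_distrib_left sum.swap[of _ "{..<d}"])
  also have "\<dots> = (\<Sum>i<n. complex_of_real (\<eta> i))"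
    using ensembleD[OF E] psd_carrier by (intro sum.cong) (auto simp: ctrace_def)
  also have "\<dots> = 1" using E unfolding ensemble_def by (metis of_real_1 of_real_sum)
  finally show ?thesis .
qed

text \<open>The trace bound \<open>\<eta>\<^sub>x \<le> q\<close> for every admissible \<open>q\<close> is what makes the confidence positive.\<close>

lemma ensemble_is_min_conf:
  assumes E: "ensemble d n \<eta> \<rho>" and x: "x < n"
  shows "is_min_conf d (avg_state d n \<eta> \<rho>) (\<rho> x) (\<eta> x) (max_conf d (\<eta> x) (\<rho> x) (avg_state d n \<eta> \<rho>))"
proof -
  define R0 where "R0 = avg_state d n \<eta> \<rho>"
  define S where "S = {q. psd d (conf_op R0 (\<rho> x) (\<eta> x) q)}"
  define c where "c = max_conf d (\<eta> x) (\<rho> x) R0"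
  have R0: "psd d R0" unfolding R0_def using psd_avg_state[OF E] .
  have rx: "psd d (\<rho> x)" "ctrace (\<rho> x) = 1" "0 < \<eta> x" using ensembleD[OF E x] by auto
  have c_Inf: "c = Inf S" unfolding c_def S_def max_conf_def ..
  have "complex_of_real 1 \<cdot>\<^sub>m R0 = R0" using psd_carrier[OF R0] by (intro eq_matI) auto
  hence one: "1 \<in> S" unfolding S_def R0_def using psd_avg_state_minus[OF E x] by simp
  have low: "\<eta> x \<le> q" if "q \<in> S" for q
  proof -
    have "0 \<le> Re (ctrace (conf_op R0 (\<rho> x) (\<eta> x) q))"
      using that psd_trace_nonneg unfolding S_def by auto
    also have "ctrace (conf_op R0 (\<rho> x) (\<eta> x) q) = complex_of_real q - complex_of_real (\<eta> x)"
      using ctrace_diff_smult[OF psd_carrier[OF R0] psd_carrier[OF rx(1)]] ctrace_avg_state[OF E] rx(2)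
      unfolding R0_def by simp
    finally show ?thesis by simp
  qed
  have bdd: "bdd_below S" using low by (intro bdd_belowI) auto
  have cS: "c \<in> S"
    using conf_Inf_mem[OF R0 psd_carrier[OF rx(1)] psd_herm[OF rx(1)], where h="\<eta> x" and p=1] one bdd
    unfolding c_Inf S_def by simp
  have "\<not> psd d (conf_op R0 (\<rho> x) (\<eta> x) q)" if "q < c" for q
    using cInf_lower[OF _ bdd, of q] that unfolding c_Inf S_def by force
  thus ?thesis using cS low[OF cS] R0 rx unfolding is_min_conf_def c_def R0_def S_def by auto
qed

lemma kron_conf_op_split:
  assumes "A0 \<in> carrier_mat a a" "A1 \<in> carrier_mat a a" "B0 \<in> carrier_mat b b" "B1 \<in> carrier_mat b b"
  shows "conf_op (kron A0 B0) (kron A1 B1) (h * h') (c * c') =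
      complex_of_real c' \<cdot>\<^sub>m kron (conf_op A0 A1 h c) B0 + complex_of_real h \<cdot>\<^sub>m kron A1 (conf_op B0 B1 h' c')"
    and "conf_op (kron A0 B0) (kron A1 B1) (h * h') (c * c') =
      complex_of_real c \<cdot>\<^sub>m kron A0 (conf_op B0 B1 h' c') + kron (conf_op A0 A1 h c) (complex_of_real h' \<cdot>\<^sub>m B1)"
proof -
  have idx: "i div b < a" "i mod b < b" if "i < a * b" for i
    using that less_mult_imp_div_less mod_less_of_less_mult by auto
  show "conf_op (kron A0 B0) (kron A1 B1) (h * h') (c * c') =
      complex_of_real c' \<cdot>\<^sub>m kron (conf_op A0 A1 h c) B0 + complex_of_real h \<cdot>\<^sub>m kron A1 (conf_op B0 B1 h' c')"
    using assms by (intro eq_matI) (auto simp: kron_def algebra_simps idx)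
  show "conf_op (kron A0 B0) (kron A1 B1) (h * h') (c * c') =
      complex_of_real c \<cdot>\<^sub>m kron A0 (conf_op B0 B1 h' c') + kron (conf_op A0 A1 h c) (complex_of_real h' \<cdot>\<^sub>m B1)"
    using assms by (intro eq_matI) (auto simp: kron_def algebra_simps idx)
qed

lemma is_min_conf_witness:
  assumes "is_min_conf n R0 R h c" "q < c"
  obtains v where "v \<in> carrier_vec n" "0 < Re (cinner v (R0 *\<^sub>v v))"
    "q * Re (cinner v (R0 *\<^sub>v v)) < h * Re (cinner v (R *\<^sub>v v))"
proof -
  have R0: "R0 \<in> carrier_mat n n" "cadj R0 = R0" and R: "R \<in> carrier_mat n n" "cadj R = R"
    using assms(1) by (auto simp: is_min_conf_def psd_def)
  note iff = psd_conf_op_iff[OF R0 R]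
  obtain v where v: "v \<in> carrier_vec n" "q * Re (cinner v (R0 *\<^sub>v v)) < h * Re (cinner v (R *\<^sub>v v))"
    using assms iff unfolding is_min_conf_def by (meson not_le)
  \<comment> \<open>the form of \<open>R0\<close> cannot vanish at \<open>v\<close>, since \<open>c R0 - h R\<close> is positive semidefinite\<close>
  have "h * Re (cinner v (R *\<^sub>v v)) \<le> c * Re (cinner v (R0 *\<^sub>v v))"
    using assms(1) iff v(1) unfolding is_min_conf_def by blast
  hence "0 < Re (cinner v (R0 *\<^sub>v v))"
    using v(2) psd_form[of n R0 v] assms(1) v(1) unfolding is_min_conf_def
    by (cases "Re (cinner v (R0 *\<^sub>v v)) = 0") auto
  thus ?thesis using that v by blast
qed

lemma scale_below_mult:
  fixes c c' q :: real
  assumes "0 < c" "0 < c'" "q < c * c'"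
  shows "\<exists>t. 0 < t \<and> t < 1 \<and> q \<le> (t * c) * (t * c')"
proof -
  define s where "s = max (1 / 2) (q / (c * c'))"
  have "0 < s" "s < 1" "q \<le> s * (c * c')"
    using assms unfolding s_def by (auto simp: field_simps max_def)
  thus ?thesis by (intro exI[of _ "sqrt s"]) (auto simp: mult_ac)
qed

lemma kron_conf_op_below_not_psd:
  assumes A: "is_min_conf a A0 A1 h c" and B: "is_min_conf b B0 B1 h' c'" and q: "q < c * c'"
  shows "\<not> psd (a * b) (conf_op (kron A0 B0) (kron A1 B1) (h * h') q)"
proof -
  have pA: "psd a A0" "psd a A1" "0 < c" and pB: "psd b B0" "psd b B1" "0 < c'"
    using A B unfolding is_min_conf_def by auto
  have K: "kron A0 B0 \<in> carrier_mat (a * b) (a * b)" "cadj (kron A0 B0) = kron A0 B0"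
    "kron A1 B1 \<in> carrier_mat (a * b) (a * b)" "cadj (kron A1 B1) = kron A1 B1"
    using psd_kron[OF pA(1) pB(1)] psd_kron[OF pA(2) pB(2)] by (auto simp: psd_def)
  \<comment> \<open>witnesses for \<open>t c\<close> and \<open>t c'\<close> multiply to a witness for \<open>q\<close>\<close>
  obtain t where t: "0 < t" "t < 1" "q \<le> (t * c) * (t * c')"
    using scale_below_mult[OF pA(3) pB(3) q] by blast
  obtain v where v: "v \<in> carrier_vec a" "0 < Re (cinner v (A0 *\<^sub>v v))"
    "t * c * Re (cinner v (A0 *\<^sub>v v)) < h * Re (cinner v (A1 *\<^sub>v v))"
    using is_min_conf_witness[OF A, of "t * c"] t pA(3) by auto
  obtain v' where v': "v' \<in> carrier_vec b" "0 < Re (cinner v' (B0 *\<^sub>v v'))"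
    "t * c' * Re (cinner v' (B0 *\<^sub>v v')) < h' * Re (cinner v' (B1 *\<^sub>v v'))"
    using is_min_conf_witness[OF B, of "t * c'"] t pB(3) by auto
  have "q * (Re (cinner v (A0 *\<^sub>v v)) * Re (cinner v' (B0 *\<^sub>v v')))
      \<le> (t * c * Re (cinner v (A0 *\<^sub>v v))) * (t * c' * Re (cinner v' (B0 *\<^sub>v v')))"
    using t(3) v(2) v'(2) by (simp add: mult_right_mono mult_ac)
  also have "\<dots> < (h * Re (cinner v (A1 *\<^sub>v v))) * (h' * Re (cinner v' (B1 *\<^sub>v v')))"
  proof (rule mult_strict_mono)
    have "0 < t * c * Re (cinner v (A0 *\<^sub>v v))" using t(1) pA(3) v(2) by simp
    thus "0 < h * Re (cinner v (A1 *\<^sub>v v))" using v(3) by linarith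
    show "0 \<le> t * c' * Re (cinner v' (B0 *\<^sub>v v'))" using t(1) pB(3) v'(2) by simp
  qed (use v(3) v'(3) in auto)
  finally have lt: "q * (Re (cinner v (A0 *\<^sub>v v)) * Re (cinner v' (B0 *\<^sub>v v'))) <
    h * h' * (Re (cinner v (A1 *\<^sub>v v)) * Re (cinner v' (B1 *\<^sub>v v')))" by (simp add: mult_ac)
  have w: "vkron v v' \<in> carrier_vec (a * b)" using v(1) v'(1) by simp
  have "Re (cinner (vkron v v') (kron A0 B0 *\<^sub>v vkron v v')) = Re (cinner v (A0 *\<^sub>v v)) * Re (cinner v' (B0 *\<^sub>v v'))"
    using pA(1) pB(1) v(1) v'(1) by (intro kron_form) (auto simp: psd_def)
  moreover have "Re (cinner (vkron v v') (kron A1 B1 *\<^sub>v vkron v v')) = Re (cinner v (A1 *\<^sub>v v)) * Re (cinner v' (B1 *\<^sub>v v'))"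
    using pA(2) pB(2) v(1) v'(1) by (intro kron_form) (auto simp: psd_def)
  ultimately show ?thesis using psd_conf_op_iff[OF K, where h="h * h'" and q=q] w lt by (metis not_le)
qed

lemma is_min_conf_kron:
  assumes A: "is_min_conf a A0 A1 h c" and B: "is_min_conf b B0 B1 h' c'"
  shows "is_min_conf (a * b) (kron A0 B0) (kron A1 B1) (h * h') (c * c')"
proof -
  have pA: "psd a A0" "psd a A1" "0 < h" "0 < c" "psd a (conf_op A0 A1 h c)"
    and pB: "psd b B0" "psd b B1" "0 < h'" "0 < c'" "psd b (conf_op B0 B1 h' c')"
    using A B unfolding is_min_conf_def by auto
  have "psd (a * b) (conf_op (kron A0 B0) (kron A1 B1) (h * h') (c * c'))"
    unfolding kron_conf_op_split(1)[OF pA(1,2)[THEN psd_carrier] pB(1,2)[THEN psd_carrier]]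
    using pA pB by (intro psd_add psd_smult psd_kron) auto
  thus ?thesis using pA pB psd_kron[OF pA(1) pB(1)] psd_kron[OF pA(2) pB(2)]
      kron_conf_op_below_not_psd[OF A B] unfolding is_min_conf_def by auto
qed

lemma is_min_conf_one: "is_min_conf 1 (1\<^sub>m 1) (1\<^sub>m 1) 1 1"
proof -
  have "\<not> psd 1 (conf_op (1\<^sub>m 1) (1\<^sub>m 1) 1 q)" if "q < 1" for q
  proof
    assume "psd 1 (conf_op (1\<^sub>m 1) (1\<^sub>m 1) 1 q)"
    hence "1 * Re (cinner (unit_vec 1 0) (1\<^sub>m 1 *\<^sub>v unit_vec 1 0))
        \<le> q * Re (cinner (unit_vec 1 0) (1\<^sub>m 1 *\<^sub>v unit_vec 1 0))"
      using psd_conf_op_iff[where R0="1\<^sub>m 1" and R="1\<^sub>m 1" and n=1 and h=1 and q=q] by auto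
    thus False using that cinner_unit_vec[of "unit_vec 1 0" 1 0] by simp
  qed
  moreover have "conf_op (1\<^sub>m 1) (1\<^sub>m 1) 1 1 = 0\<^sub>m 1 1" by (rule eq_matI) auto
  hence "psd 1 (conf_op (1\<^sub>m 1) (1\<^sub>m 1) 1 1)" using psd_zero by metis
  ultimately show ?thesis unfolding is_min_conf_def using psd_one by auto
qed

lemma is_min_conf_tensor_list:
  "\<forall>l<L. is_min_conf (d l) (R0 l) (R l) (h l) (c l) \<Longrightarrow>
    is_min_conf (\<Prod>l<L. d l) (tensor_list L R0) (tensor_list L R) (\<Prod>l<L. h l) (\<Prod>l<L. c l)"
proof (induction L arbitrary: d R0 R h c)
  case (Suc L)
  have "is_min_conf (d 0 * (\<Prod>l<L. d (Suc l))) (kron (R0 0) (tensor_list L (\<lambda>l. R0 (Suc l))))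
      (kron (R 0) (tensor_list L (\<lambda>l. R (Suc l)))) (h 0 * (\<Prod>l<L. h (Suc l))) (c 0 * (\<Prod>l<L. c (Suc l)))"
    using Suc by (intro is_min_conf_kron) auto
  thus ?case by (simp only: tensor_list_Suc prod.lessThan_Suc_shift)
qed (use is_min_conf_one in simp)

lemma psd_ker_proj_conf_op: "is_min_conf n R0 R h c \<Longrightarrow> psd n (ker_proj (conf_op R0 R h c))"
  unfolding is_min_conf_def
  by (intro psd_ker_proj conf_op_carrier) (auto simp: psd_def cadj_minus[of _ n n] cadj_smult)

section \<open>The kernel projections of a sequence ensemble\<close>

text \<open>A Hermitian \<open>Z\<close> is injective on its own range; commuting \<open>X\<close> past \<open>Z\<close> puts \<open>X Z y\<close> in that range.\<close>

lemma herm_commute_kernel: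
  assumes Z: "Z \<in> carrier_mat n n" "cadj Z = Z" and X: "X \<in> carrier_mat n n" and ZX: "Z * X = X * Z"
    and y: "y \<in> carrier_vec n" and z: "(Z * X) *\<^sub>v (Z *\<^sub>v y) = 0\<^sub>v n"
  shows "X *\<^sub>v (Z *\<^sub>v y) = 0\<^sub>v n"
proof -
  have Xy: "X *\<^sub>v y \<in> carrier_vec n" using X y by simp
  have XZy: "X *\<^sub>v (Z *\<^sub>v y) = Z *\<^sub>v (X *\<^sub>v y)"
    using Z X y ZX by (metis assoc_mult_mat_vec)
  have "Z *\<^sub>v (Z *\<^sub>v (X *\<^sub>v y)) = Z *\<^sub>v (X *\<^sub>v (Z *\<^sub>v y))" using XZy by simp
  also have "\<dots> = (Z * X) *\<^sub>v (Z *\<^sub>v y)" using Z X y by simp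
  finally have "Z *\<^sub>v (Z *\<^sub>v (X *\<^sub>v y)) = 0\<^sub>v n" using z by simp
  hence "cinner (Z *\<^sub>v (X *\<^sub>v y)) (Z *\<^sub>v (X *\<^sub>v y)) = 0"
    using cinner_adj[OF Z(1) Xy, of "Z *\<^sub>v (X *\<^sub>v y)"] Z X y by simp
  hence "Z *\<^sub>v (X *\<^sub>v y) = 0\<^sub>v n" using cinner_self_eq_0 Z(1) by fastforce
  thus ?thesis using XZy by simp
qed

lemma kron_one_left_fixes:
  assumes B0: "B0 \<in> carrier_mat b b" and M: "M \<in> carrier_mat b b" and Q: "Q \<in> carrier_mat b b"
    and Q_fix: "\<forall>v \<in> mat_kernel M \<inter> mat_range B0. Q *\<^sub>v v = v"
    and y: "y \<in> carrier_vec (a * b)" and w: "w = kron (1\<^sub>m a) B0 *\<^sub>v y"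
    and Mw: "kron (1\<^sub>m a) M *\<^sub>v w = 0\<^sub>v (a * b)"
  shows "kron (1\<^sub>m a) Q *\<^sub>v w = w"
proof -
  have wc: "w \<in> carrier_vec (a * b)" unfolding w using kron_carrier[OF one_carrier_mat B0] y
    by (rule mult_mat_vec_carrier)
  show ?thesis
  proof (rule eq_vec_slicesI[of _ a b])
    fix i assume i: "i < a"
    have "slice b i w \<in> mat_range B0"
      unfolding w slice_kron_one[OF B0 y i] using B0 by (intro mat_rangeI) auto
    moreover have "M *\<^sub>v slice b i w = 0\<^sub>v b"
      using slice_kron_one[OF M wc i] Mw slice_zero[OF i] by simp
    ultimately have "Q *\<^sub>v slice b i w = slice b i w"
      using Q_fix M by (auto simp: mat_kernel_def)
    thus "slice b i (kron (1\<^sub>m a) Q *\<^sub>v w) = slice b i w" using slice_kron_one[OF Q wc i] by simp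
  qed (use kron_carrier[OF one_carrier_mat Q] wc in \<open>auto intro: mult_mat_vec_carrier\<close>)
qed

lemma kron_ker_proj_one_fixes:
  assumes A: "A \<in> carrier_mat a a" "cadj A = A" and w: "w \<in> carrier_vec (a * b)"
    and Aw: "kron A (1\<^sub>m b) *\<^sub>v w = 0\<^sub>v (a * b)"
  shows "kron (ker_proj A) (1\<^sub>m b) *\<^sub>v w = w"
proof -
  obtain Y where Y: "Y \<in> carrier_mat a a" "ker_proj A = 1\<^sub>m a - Y * A" using ker_proj_factor[OF A] by blast
  define K where "K = kron Y (1\<^sub>m b) * kron A (1\<^sub>m b)"
  have K: "K \<in> carrier_mat (a * b) (a * b)" unfolding K_def using Y A by auto
  have "kron (ker_proj A) (1\<^sub>m b) = 1\<^sub>m (a * b) - K"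
    using Y A kron_minus_left[of "1\<^sub>m a" a "Y * A" "1\<^sub>m b" b] kron_mult[of Y a a "1\<^sub>m b" b b A a "1\<^sub>m b" b]
    unfolding K_def by (simp add: kron_one)
  moreover have "K *\<^sub>v w = kron Y (1\<^sub>m b) *\<^sub>v (kron A (1\<^sub>m b) *\<^sub>v w)"
    unfolding K_def using Y A w by (intro assoc_mult_mat_vec[of _ "a * b" "a * b" _ "a * b"]) auto
  hence "K *\<^sub>v w = 0\<^sub>v (a * b)"
    unfolding Aw using Y by (auto intro!: eq_vecI simp: scalar_prod_def)
  ultimately show ?thesis using one_minus_mult_vec[OF K w] w by simp
qed

lemma kron_kernel_one_left:
  assumes A0: "A0 \<in> carrier_mat a a" "cadj A0 = A0" and B0: "B0 \<in> carrier_mat b b"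
    and M: "M \<in> carrier_mat b b" and u: "u \<in> carrier_vec (a * b)"
    and z: "kron A0 M *\<^sub>v (kron A0 B0 *\<^sub>v u) = 0\<^sub>v (a * b)"
  shows "kron (1\<^sub>m a) M *\<^sub>v (kron A0 B0 *\<^sub>v u) = 0\<^sub>v (a * b)"
proof -
  define Z X y where "Z = kron A0 (1\<^sub>m b)" "X = kron (1\<^sub>m a) M" "y = kron (1\<^sub>m a) B0 *\<^sub>v u"
  have Z: "Z \<in> carrier_mat (a * b) (a * b)" "cadj Z = Z" unfolding Z_X_y_def using A0 cadj_kron[of A0 a a "1\<^sub>m b" b b] by auto
  have X: "X \<in> carrier_mat (a * b) (a * b)" unfolding Z_X_y_def using M by auto
  have ZX: "Z * X = kron A0 M" "X * Z = kron A0 M"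
    unfolding Z_X_y_def using kron_split_one[OF A0(1) M] by simp_all
  have y: "y \<in> carrier_vec (a * b)"
    unfolding Z_X_y_def using kron_carrier[OF one_carrier_mat B0] u by (rule mult_mat_vec_carrier)
  have w: "kron A0 B0 *\<^sub>v u = Z *\<^sub>v y"
    unfolding Z_X_y_def using kron_split_one(1)[OF A0(1) B0] A0 B0 u
    by (simp add: assoc_mult_mat_vec[of _ "a * b" "a * b" _ "a * b"])
  show ?thesis using herm_commute_kernel[OF Z X _ y] ZX z unfolding w Z_X_y_def(2) by simp
qed

lemma kron_kernel_one_right:
  assumes A0: "A0 \<in> carrier_mat a a" and B0: "B0 \<in> carrier_mat b b" "cadj B0 = B0"
    and N: "N \<in> carrier_mat a a" and u: "u \<in> carrier_vec (a * b)"
    and z: "kron N B0 *\<^sub>v (kron A0 B0 *\<^sub>v u) = 0\<^sub>v (a * b)"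
  shows "kron N (1\<^sub>m b) *\<^sub>v (kron A0 B0 *\<^sub>v u) = 0\<^sub>v (a * b)"
proof -
  define Z X y where "Z = kron (1\<^sub>m a) B0" "X = kron N (1\<^sub>m b)" "y = kron A0 (1\<^sub>m b) *\<^sub>v u"
  have Z: "Z \<in> carrier_mat (a * b) (a * b)" "cadj Z = Z" unfolding Z_X_y_def using B0 cadj_kron[of "1\<^sub>m a" a a B0 b b] by auto
  have X: "X \<in> carrier_mat (a * b) (a * b)" unfolding Z_X_y_def using N by auto
  have ZX: "Z * X = kron N B0" "X * Z = kron N B0"
    unfolding Z_X_y_def using kron_split_one[OF N B0(1)] by simp_all
  have y: "y \<in> carrier_vec (a * b)"
    unfolding Z_X_y_def using kron_carrier[OF A0 one_carrier_mat] u by (rule mult_mat_vec_carrier)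
  have w: "kron A0 B0 *\<^sub>v u = Z *\<^sub>v y"
    unfolding Z_X_y_def using kron_split_one(2)[OF A0 B0(1)] A0 B0 u
    by (simp add: assoc_mult_mat_vec[of _ "a * b" "a * b" _ "a * b"])
  show ?thesis using herm_commute_kernel[OF Z X _ y] ZX z unfolding w Z_X_y_def(2) by simp
qed

lemma kron_conf_op_kernel:
  assumes A: "is_min_conf a A0 A1 h c" and B: "is_min_conf b B0 B1 h' c'" and w: "w \<in> carrier_vec (a * b)"
    and Mw: "conf_op (kron A0 B0) (kron A1 B1) (h * h') (c * c') *\<^sub>v w = 0\<^sub>v (a * b)"
  shows "kron A0 (conf_op B0 B1 h' c') *\<^sub>v w = 0\<^sub>v (a * b)" "kron (conf_op A0 A1 h c) B0 *\<^sub>v w = 0\<^sub>v (a * b)"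
proof -
  define Al M where "Al = conf_op A0 A1 h c" and "M = conf_op B0 B1 h' c'"
  have pA: "psd a A0" "psd a A1" "0 < h" "0 < c" "psd a Al"
    and pB: "psd b B0" "psd b B1" "0 < h'" "0 < c'" "psd b M"
    using A B unfolding is_min_conf_def Al_def M_def by auto
  note split = kron_conf_op_split[OF pA(1,2)[THEN psd_carrier] pB(1,2)[THEN psd_carrier],
      where h=h and h'=h' and c=c and c'=c', folded Al_def M_def]
  \<comment> \<open>both splittings of the sequence operator are sums of positive semidefinite terms\<close>
  have "psd (a * b) (complex_of_real c \<cdot>\<^sub>m kron A0 M)" "psd (a * b) (kron Al (complex_of_real h' \<cdot>\<^sub>m B1))"
    using psd_smult[OF psd_kron[OF pA(1) pB(5)], of c] psd_kron[OF pA(5) psd_smult[OF pB(2), of h']] pA(4) pB(3)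
    by simp_all
  from psd_add_kernel(1)[OF this w Mw[unfolded split(2)]]
  show "kron A0 (conf_op B0 B1 h' c') *\<^sub>v w = 0\<^sub>v (a * b)" unfolding M_def[symmetric]
    by (rule smult_mat_kernel[OF kron_carrier[OF psd_carrier[OF pA(1)] psd_carrier[OF pB(5)]] w, rotated])
      (use pA(4) in simp)
  have "psd (a * b) (complex_of_real c' \<cdot>\<^sub>m kron Al B0)" "psd (a * b) (complex_of_real h \<cdot>\<^sub>m kron A1 M)"
    using psd_smult[OF psd_kron[OF pA(5) pB(1)], of c'] psd_smult[OF psd_kron[OF pA(2) pB(5)], of h] pB(4) pA(3)
    by simp_all
  from psd_add_kernel(1)[OF this w Mw[unfolded split(1)]]
  show "kron (conf_op A0 A1 h c) B0 *\<^sub>v w = 0\<^sub>v (a * b)" unfolding Al_def[symmetric]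
    by (rule smult_mat_kernel[OF kron_carrier[OF psd_carrier[OF pA(5)] psd_carrier[OF pB(1)]] w, rotated])
      (use pB(4) in simp)
qed

lemma kron_ker_proj_fixes:
  assumes A: "is_min_conf a A0 A1 h c" and B: "is_min_conf b B0 B1 h' c'"
    and Q: "Q \<in> carrier_mat b b" and Q_fix: "\<forall>v \<in> mat_kernel (conf_op B0 B1 h' c') \<inter> mat_range B0. Q *\<^sub>v v = v"
    and w: "w \<in> mat_kernel (conf_op (kron A0 B0) (kron A1 B1) (h * h') (c * c')) \<inter> mat_range (kron A0 B0)"
  shows "kron (ker_proj (conf_op A0 A1 h c)) Q *\<^sub>v w = w"
proof -
  define Al M where "Al = conf_op A0 A1 h c" and "M = conf_op B0 B1 h' c'"
  have pA: "psd a A0" "psd a A1" "psd a Al" and pB: "psd b B0" "psd b B1" "psd b M"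
    using A B unfolding is_min_conf_def Al_def M_def by auto
  note cA = pA[THEN psd_carrier] and cB = pB[THEN psd_carrier]
  obtain u where u: "u \<in> carrier_vec (a * b)" "w = kron A0 B0 *\<^sub>v u"
    using w kron_carrier[OF cA(1) cB(1)] by (auto elim: mat_rangeE)
  have wc: "w \<in> carrier_vec (a * b)" using w cA cB by (auto simp: mat_kernel_def)
  have "conf_op (kron A0 B0) (kron A1 B1) (h * h') (c * c') *\<^sub>v w = 0\<^sub>v (a * b)"
    using w cA cB by (auto simp: mat_kernel_def)
  note ker = kron_conf_op_kernel[OF A B wc this, folded Al_def M_def]
  have tail: "kron (1\<^sub>m a) M *\<^sub>v w = 0\<^sub>v (a * b)"
    using kron_kernel_one_left[OF cA(1) psd_herm[OF pA(1)] cB(1) cB(3) u(1)] ker(1) u(2) by simp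
  have head: "kron Al (1\<^sub>m b) *\<^sub>v w = 0\<^sub>v (a * b)"
    using kron_kernel_one_right[OF cA(1) cB(1) psd_herm[OF pB(1)] cA(3) u(1)] ker(2) u(2) by simp
  have Ql: "ker_proj Al \<in> carrier_mat a a" using psd_carrier[OF psd_ker_proj[OF cA(3) psd_herm[OF pA(3)]]] .
  have "kron (1\<^sub>m a) Q *\<^sub>v w = w"
  proof (rule kron_one_left_fixes[OF cB(1) cB(3) Q Q_fix[folded M_def]])
    show "kron A0 (1\<^sub>m b) *\<^sub>v u \<in> carrier_vec (a * b)"
      using kron_carrier[OF cA(1) one_carrier_mat] u(1) by (rule mult_mat_vec_carrier)
    show "w = kron (1\<^sub>m a) B0 *\<^sub>v (kron A0 (1\<^sub>m b) *\<^sub>v u)"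
      using u kron_split_one(2)[OF cA(1) cB(1)] cA cB by (simp add: assoc_mult_mat_vec[of _ "a * b" "a * b" _ "a * b"])
  qed (rule tail)
  moreover have "kron (ker_proj Al) (1\<^sub>m b) *\<^sub>v w = w"
    using kron_ker_proj_one_fixes[OF cA(3) psd_herm[OF pA(3)] wc head] .
  ultimately show ?thesis unfolding Al_def[symmetric] kron_split_one(1)[OF Ql Q]
    using Ql Q wc by (simp add: assoc_mult_mat_vec[of _ "a * b" "a * b" _ "a * b"])
qed

lemma tensor_list_ker_proj_fixes:
  assumes "\<forall>l<L. is_min_conf (d l) (R0 l) (R l) (h l) (c l)"
  shows "\<forall>w \<in> mat_kernel (conf_op (tensor_list L R0) (tensor_list L R) (\<Prod>l<L. h l) (\<Prod>l<L. c l))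
      \<inter> mat_range (tensor_list L R0). tensor_list L (\<lambda>l. ker_proj (conf_op (R0 l) (R l) (h l) (c l))) *\<^sub>v w = w"
  using assms
proof (induction L arbitrary: d R0 R h c)
  case 0
  thus ?case by (auto simp: mat_kernel_def)
next
  case (Suc L)
  let ?Q = "tensor_list L (\<lambda>l. ker_proj (conf_op (R0 (Suc l)) (R (Suc l)) (h (Suc l)) (c (Suc l))))"
  have head: "is_min_conf (d 0) (R0 0) (R 0) (h 0) (c 0)" using Suc.prems by simp
  have tail: "\<forall>l<L. is_min_conf (d (Suc l)) (R0 (Suc l)) (R (Suc l)) (h (Suc l)) (c (Suc l))"
    using Suc.prems by simp
  have "psd (\<Prod>l<L. d (Suc l)) ?Q" using tail by (simp add: psd_tensor_list psd_ker_proj_conf_op)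
  thus ?case
    using kron_ker_proj_fixes[OF head is_min_conf_tensor_list[OF tail] psd_carrier Suc.IH[OF tail]]
    by (simp only: tensor_list_Suc prod.lessThan_Suc_shift) blast
qed

lemma mat_kernel_subset_conf_op:
  assumes M: "psd n (conf_op R0 R h q)" and R0: "R0 \<in> carrier_mat n n" and R: "psd n R" and h: "0 < h"
  shows "mat_kernel R0 \<subseteq> mat_kernel (conf_op R0 R h q)"
proof
  fix v assume "v \<in> mat_kernel R0"
  hence v: "v \<in> carrier_vec n" "R0 *\<^sub>v v = 0\<^sub>v n" using R0 by (auto simp: mat_kernel_def)
  have "Re (cinner v (conf_op R0 R h q *\<^sub>v v)) = - h * Re (cinner v (R *\<^sub>v v))"
    using conf_op_form[OF R0 psd_carrier[OF R] v(1)] v by simp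
  also have "\<dots> \<le> 0" using psd_form[OF R v(1)] h by simp
  finally have "conf_op R0 R h q *\<^sub>v v = 0\<^sub>v n"
    using psd_form[OF M v(1)] by (intro psd_form_zero[OF M v(1)]) simp
  thus "v \<in> mat_kernel (conf_op R0 R h q)" using v R0 R by (auto simp: mat_kernel_def psd_def)
qed

lemma supp_proj_mult_vec_kernel:
  assumes R0: "R0 \<in> carrier_mat n n" "cadj R0 = R0" and M: "M \<in> carrier_mat n n"
    and ker: "mat_kernel R0 \<subseteq> mat_kernel M" and y: "y \<in> mat_kernel M"
  shows "supp_proj R0 *\<^sub>v y \<in> mat_kernel M \<inter> mat_range R0"
proof -
  define P where "P = supp_proj R0"
  have PS: "is_orth_proj n P (mat_range R0)" unfolding P_def using supp_proj_is_orth_proj[OF R0(1)] .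
  note p = is_orth_projD[OF PS]
  have yc: "y \<in> carrier_vec n" "M *\<^sub>v y = 0\<^sub>v n" using y M by (auto simp: mat_kernel_def)
  \<comment> \<open>the component of \<open>y\<close> orthogonal to the support of \<open>R0\<close> lies in its kernel, hence in that of \<open>M\<close>\<close>
  have "(1\<^sub>m n - P) *\<^sub>v y \<in> mat_kernel R0"
    using is_orth_proj_complement[OF PS] supp_proj_kernel[OF R0] yc(1) unfolding P_def
    by (auto simp: is_orth_proj_def intro: mat_rangeI)
  hence "M *\<^sub>v (y - P *\<^sub>v y) = 0\<^sub>v n" using ker M p(1) yc by (auto simp: mat_kernel_def one_minus_mult_vec)
  hence "M *\<^sub>v (P *\<^sub>v y) = 0\<^sub>v n"
    using M p(1) yc by (auto simp: mult_minus_distrib_mat_vec[of M n n y "P *\<^sub>v y"] uminus_zero_vec_eq)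
  moreover have "P *\<^sub>v y \<in> mat_range R0" using is_orth_proj_mult_vec[OF PS yc(1)] .
  ultimately show ?thesis unfolding P_def[symmetric] using M p(1) yc by (auto simp: mat_kernel_def)
qed

lemma supp_proj_sandwich_fixed:
  assumes R0: "R0 \<in> carrier_mat n n" "cadj R0 = R0" and M: "M \<in> carrier_mat n n"
    and ker: "mat_kernel R0 \<subseteq> mat_kernel M"
    and E: "E \<in> carrier_mat n n" "cadj E = E" "M * E = 0\<^sub>m n n"
    and Q: "Q \<in> carrier_mat n n" "cadj Q = Q"
    and Q_fix: "\<forall>w \<in> mat_kernel M \<inter> mat_range R0. Q *\<^sub>v w = w"
  shows "Q * supp_proj R0 * E * supp_proj R0 * Q = supp_proj R0 * E * supp_proj R0"
proof -
  define P where "P = supp_proj R0"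
  note p = is_orth_projD[OF supp_proj_is_orth_proj[OF R0(1)], folded P_def]
  define F where "F = P * E * P"
  have F: "F \<in> carrier_mat n n" unfolding F_def using p(1) E(1) by simp
  have QF: "Q * F = F"
  proof (rule mat_eq_mult_vecI[of _ n n])
    fix z :: "complex vec" assume z: "z \<in> carrier_vec n"
    have "M *\<^sub>v (E *\<^sub>v (P *\<^sub>v z)) = (M * E) *\<^sub>v (P *\<^sub>v z)"
      by (rule assoc_mult_mat_vec[symmetric, OF M E(1)]) (use p(1) z in simp)
    also have "\<dots> = 0\<^sub>v n" unfolding E(3) using p(1) z by (intro eq_vecI) (auto simp: scalar_prod_def)
    finally have "E *\<^sub>v (P *\<^sub>v z) \<in> mat_kernel M" using E M p(1) z by (auto simp: mat_kernel_def)
    hence "Q *\<^sub>v (P *\<^sub>v (E *\<^sub>v (P *\<^sub>v z))) = P *\<^sub>v (E *\<^sub>v (P *\<^sub>v z))"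
      using Q_fix supp_proj_mult_vec_kernel[OF R0 M ker] unfolding P_def by blast
    moreover have "F *\<^sub>v z = P *\<^sub>v (E *\<^sub>v (P *\<^sub>v z))"
      unfolding F_def using p(1) E(1) z
      by (simp add: assoc_mult_mat_vec[of P n n "E * P" n] assoc_mult_mat_vec[of E n n P n])
    ultimately show "(Q * F) *\<^sub>v z = F *\<^sub>v z" using Q F z by simp
  qed (use Q F in auto)
  have "cadj F = F" unfolding F_def using p E by (simp add: cadj_mult[of _ n n _ n] assoc_mult_mat[of _ n n _ n _ n])
  hence "F * Q = F" using cadj_mult[OF Q(1) F] QF Q(2) by simp
  hence "Q * F * Q = F" using QF by simp
  thus ?thesis unfolding P_def[symmetric] F_def using Q p(1) E(1) by (simp add: assoc_mult_mat[of _ n n _ n _ n])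
qed

lemma tensor_list_sandwich_fixed:
  assumes factors: "\<forall>l<L. is_min_conf (d l) (R0 l) (R l) (h l) (c l)"
    and E: "psd (\<Prod>l<L. d l) E"
    and tr: "ctrace (conf_op (tensor_list L R0) (tensor_list L R) (\<Prod>l<L. h l) (\<Prod>l<L. c l) * E) = 0"
  shows "let P = supp_proj (tensor_list L R0); Q = tensor_list L (\<lambda>l. ker_proj (conf_op (R0 l) (R l) (h l) (c l)))
    in Q * P * E * P * Q = P * E * P"
proof -
  define N M Q where "N = (\<Prod>l<L. d l)"
    and "M = conf_op (tensor_list L R0) (tensor_list L R) (\<Prod>l<L. h l) (\<Prod>l<L. c l)"
    and "Q = tensor_list L (\<lambda>l. ker_proj (conf_op (R0 l) (R l) (h l) (c l)))"
  have seq: "psd N (tensor_list L R0)" "psd N (tensor_list L R)" "0 < (\<Prod>l<L. h l)" "psd N M"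
    using is_min_conf_tensor_list[OF factors] unfolding is_min_conf_def M_def N_def by blast+
  have "mat_kernel (tensor_list L R0) \<subseteq> mat_kernel M"
    using mat_kernel_subset_conf_op[OF seq(4)[unfolded M_def] psd_carrier[OF seq(1)] seq(2,3)]
    unfolding M_def .
  moreover have "psd N Q" using factors unfolding N_def Q_def by (simp add: psd_tensor_list psd_ker_proj_conf_op)
  ultimately show ?thesis
    using psd_carrier[OF seq(1)] psd_herm[OF seq(1)] psd_carrier[OF seq(4)]
      psd_carrier[OF E[folded N_def]] psd_herm[OF E] psd_trace_mult_zero[OF seq(4) E[folded N_def] tr[folded M_def]]
      tensor_list_ker_proj_fixes[OF factors, folded M_def Q_def]
    unfolding Let_def Q_def[symmetric] by (intro supp_proj_sandwich_fixed) (auto simp: psd_def)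
qed

theorem lemma5:
  fixes L :: nat and d n :: "nat \<Rightarrow> nat"
    and \<eta> :: "nat \<Rightarrow> nat \<Rightarrow> real" and \<rho> :: "nat \<Rightarrow> nat \<Rightarrow> complex mat"
    and x :: "nat \<Rightarrow> nat" and E :: "complex mat"
  assumes ens: "\<forall>l<L. ensemble (d l) (n l) (\<eta> l) (\<rho> l)"
    and x_range: "\<forall>l<L. x l < n l"
    and E_in: "E \<in> seq_MC_set L d n \<eta> \<rho> x"
  shows
    "(let P = supp_proj (seq_avg L d n \<eta> \<rho>);
          Q = tensor_list L (\<lambda>l. ker_proj
                (complex_of_real (comp_conf d n \<eta> \<rho> l (x l)) \<cdot>\<^sub>m avg_state (d l) (n l) (\<eta> l) (\<rho> l)
                 - complex_of_real (\<eta> l (x l)) \<cdot>\<^sub>m \<rho> l (x l)))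
      in Q * P * E * P * Q = P * E * P)"
proof -
  define R0 R h c where "R0 = (\<lambda>l. avg_state (d l) (n l) (\<eta> l) (\<rho> l))" and "R = (\<lambda>l. \<rho> l (x l))"
    and "h = (\<lambda>l. \<eta> l (x l))" and "c = (\<lambda>l. comp_conf d n \<eta> \<rho> l (x l))"
  have factors: "\<forall>l<L. is_min_conf (d l) (R0 l) (R l) (h l) (c l)"
    using ens x_range ensemble_is_min_conf unfolding R0_def R_def h_def c_def comp_conf_def by blast
  have "seq_conf L d n \<eta> \<rho> x = (\<Prod>l<L. c l)"
    using is_min_conf_max_conf[OF is_min_conf_tensor_list[OF factors]]
    unfolding seq_conf_def seq_dim_def seq_prob_def seq_state_def seq_avg_def R0_def R_def h_def by simp
  hence "psd (\<Prod>l<L. d l) E"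
    and "ctrace (conf_op (tensor_list L R0) (tensor_list L R) (\<Prod>l<L. h l) (\<Prod>l<L. c l) * E) = 0"
    using E_in unfolding seq_MC_set_def seq_dim_def seq_prob_def seq_state_def seq_avg_def R0_def R_def h_def
    by auto
  from tensor_list_sandwich_fixed[OF factors this] show ?thesis
    unfolding seq_avg_def R0_def R_def h_def c_def .
qed

end
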